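(* For $n\ge1$ let $C_n^\Sigma:=\sum_{R\subseteq[n-1]}C_n^R$, where $C_n^R$ is the number of $R$-312-avoiding $R$-permutations. Then $C_n^\Sigma$ equals: (i) the number of ordered set partitions of $[n]$ that avoid the pattern 312; (ii) the number of rightmost clump deleting chains for $[n]$; and also the number of tableaux that are gapless $\lambda$-keys for some partition $\lambda$ whose column lengths are pairwise distinct and all less than $n$ (the null tableau of the empty shape included).
   Context: Fix $n\ge1$; $[m]=\{1,\dots,m\}$. For $R\subseteq[n-1]$ with elements $q_1<\dots<q_r$, $q_0:=0$, $q_{r+1}:=n$: an $R$-permutation is a permutation $\pi$ of $[n]$ (one-line notation) strictly increasing on each index set $\{q_{h-1}+1,\dots,q_h\}$; it is $R$-312-containing if there exist $h\in[r-1]$ and $1\le a\le q_h<b\le q_{h+1}<c\le n$ with $\pi_b<\pi_c<\pi_a$, and $R$-312-avoiding otherwise. An ordered set partition of $[n]$ is a sequence $(A_1,\dots,A_k)$, $k\ge1$, of nonempty pairwise disjoint sets with union $[n]$; it avoids 312 if there are no $i<j<l$ and $a\in A_i$, $b\in A_j$, $c\in A_l$ with $b<c<a$. An $R$-chain is $\emptyset=B_0\subset B_1\subset\cdots\subset B_{r+1}=[n]$ with $|B_h|=q_h$. A clump of a finite set of integers is a maximal subset of consecutive integers; clumps are indexed $L_1,\dots,L_f$ increasingly. An $R$-chain is $R$-rightmost clump deleting if for each $h\in[r]$, writing $B_{h+1}=L_1\cup\cdots\cup L_f$ as clumps, there is $e\in[f]$ with $L_e\cup\cdots\cup L_f\supseteq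 B_{h+1}\setminus B_h\supseteq L_{e+1}\cup\cdots\cup L_f$. A rightmost clump deleting chain for $[n]$ is a strictly increasing chain of sets $\emptyset=B_0\subsetneq B_1\subsetneq\cdots\subsetneq B_{k}=[n]$ ($k\ge1$) that is an $R$-rightmost clump deleting $R$-chain for $R:=\{|B_1|,\dots,|B_{k-1}|\}$. A partition is $\lambda=(\lambda_1\ge\cdots\ge\lambda_n\ge0)\in\mathbb{Z}^n$, with column lengths $\zeta_j:=\#\{i:\lambda_i\ge j\}$, $j\in[\lambda_1]$; let $q_1<\dots<q_r$ be its distinct column lengths less than $n$. A tableau of shape $\lambda$ fills its boxes with values in $[n]$, strictly increasing down columns, weakly increasing along rows. A $\lambda$-key is such a tableau whose column entry sets weakly decrease (under inclusion) from left to right. A $\lambda$-key is gapless if for every $h\in[r-1]$: letting $b$ be the smallest value in the columns of length $q_{h+1}$ not appearing in the columns of length $q_h$, and $m$ the largest value in the columns of length $q_h$, if $b\le m$ then every column of length $q_{h+1}$ contains all of $b,\dots,m$. *)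

theory Defs
  imports "HOL-Combinatorics.Permutations"
begin

(* q_0 = 0, q_1 < ... < q_r the elements of R, q_{r+1} = n; (qseq n R) ! h = q_h *)
definition qseq :: "nat \<Rightarrow> nat set \<Rightarrow> nat list" where
  "qseq n R = [0] @ sorted_list_of_set R @ [n]"

definition R_card :: "nat set \<Rightarrow> nat" where
  "R_card R = card R"

(* permutation of [n] in one-line notation: i \<mapsto> \<pi> i, bijection of {1..n} fixing everything else *)
definition R_permutation :: "nat \<Rightarrow> nat set \<Rightarrow> (nat \<Rightarrow> nat) \<Rightarrow> bool" where
  "R_permutation n R \<pi> \<longleftrightarrow> \<pi> permutes {1..n} \<and>
     (\<forall>h\<in>{1..R_card R + 1}.
        strict_mono_on {qseq n R ! (h - 1) + 1 .. qseq n R ! h} \<pi>)"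

definition R_312_containing :: "nat \<Rightarrow> nat set \<Rightarrow> (nat \<Rightarrow> nat) \<Rightarrow> bool" where
  "R_312_containing n R \<pi> \<longleftrightarrow>
     (\<exists>h\<in>{1..R_card R - 1}. \<exists>a b c.
        1 \<le> a \<and> a \<le> qseq n R ! h \<and> qseq n R ! h < b \<and> b \<le> qseq n R ! (h + 1) \<and>
        qseq n R ! (h + 1) < c \<and> c \<le> n \<and> \<pi> b < \<pi> c \<and> \<pi> c < \<pi> a)"

definition C_R :: "nat \<Rightarrow> nat set \<Rightarrow> nat" where
  "C_R n R = card {\<pi>. R_permutation n R \<pi> \<and> \<not> R_312_containing n R \<pi>}"

definition C_Sigma :: "nat \<Rightarrow> nat" where
  "C_Sigma n = (\<Sum>R\<in>Pow {1..n - 1}. C_R n R)"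

definition ordered_set_partition :: "nat \<Rightarrow> nat set list \<Rightarrow> bool" where
  "ordered_set_partition n As \<longleftrightarrow> length As \<ge> 1 \<and>
     (\<forall>i<length As. As ! i \<noteq> {}) \<and>
     (\<forall>i j. i < j \<and> j < length As \<longrightarrow> As ! i \<inter> As ! j = {}) \<and>
     \<Union>(set As) = {1..n}"

definition osp_avoids_312 :: "nat set list \<Rightarrow> bool" where
  "osp_avoids_312 As \<longleftrightarrow>
     \<not> (\<exists>i j l a b c. i < j \<and> j < l \<and> l < length As \<and>
          a \<in> As ! i \<and> b \<in> As ! j \<and> c \<in> As ! l \<and> b < c \<and> c < a)"

definition is_interval :: "nat set \<Rightarrow> bool" where
  "is_interval L \<longleftrightarrow> (\<exists>a b. a \<le> b \<and> L = {a..b})"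

definition clump :: "nat set \<Rightarrow> nat set \<Rightarrow> bool" where
  "clump S L \<longleftrightarrow> L \<subseteq> S \<and> is_interval L \<and>
     (\<forall>L'. is_interval L' \<and> L \<subseteq> L' \<and> L' \<subseteq> S \<longrightarrow> L' = L)"

(* Clumps are indexed increasingly L_1,...,L_f (by position, i.e. by minimum).
   Condition for B = B_{h+1}, B' = B_h: exists e with
   L_e \<union> ... \<union> L_f \<supseteq> B - B' \<supseteq> L_{e+1} \<union> ... \<union> L_f *)
definition rightmost_clump_step :: "nat set \<Rightarrow> nat set \<Rightarrow> bool" where
  "rightmost_clump_step Bh Bh1 \<longleftrightarrow>
     (\<exists>Le. clump Bh1 Le \<and>
        Bh1 - Bh \<subseteq> \<Union>{L. clump Bh1 L \<and> Min L \<ge> Min Le} \<and>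
        \<Union>{L. clump Bh1 L \<and> Min L > Min Le} \<subseteq> Bh1 - Bh)"

(* Bs = [B_1, ..., B_k], with B_0 = {} implicit:
   {} \<subset> B_1 \<subset> ... \<subset> B_k = [n], k \<ge> 1, and R-rightmost clump deleting for
   R = {|B_1|,...,|B_{k-1}|} (so r = k - 1 and the condition is for h \<in> [k-1]).
   The R-chain cardinality condition |B_h| = q_h holds automatically. *)
definition rcd_chain :: "nat \<Rightarrow> nat set list \<Rightarrow> bool" where
  "rcd_chain n Bs \<longleftrightarrow> length Bs \<ge> 1 \<and>
     {} \<subset> Bs ! 0 \<and>
     (\<forall>i. i + 1 < length Bs \<longrightarrow> Bs ! i \<subset> Bs ! (i + 1)) \<and>
     last Bs = {1..n} \<and>
     (\<forall>h\<in>{1..length Bs - 1}. rightmost_clump_step (Bs ! (h - 1)) (Bs ! h))"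

(* \<lambda> = (\<lambda>_1 \<ge> ... \<ge> \<lambda>_n \<ge> 0) as a list of length n; \<lambda>_i = lam ! (i-1) *)
definition is_partition :: "nat \<Rightarrow> nat list \<Rightarrow> bool" where
  "is_partition n lam \<longleftrightarrow> length lam = n \<and> (\<forall>i. i + 1 < n \<longrightarrow> lam ! (i + 1) \<le> lam ! i)"

definition col_len :: "nat \<Rightarrow> nat list \<Rightarrow> nat \<Rightarrow> nat" where
  "col_len n lam j = card {i\<in>{1..n}. lam ! (i - 1) \<ge> j}"

(* a tableau is given by its list of columns, column j (1-based) = T ! (j-1), top to bottom *)
definition is_tableau :: "nat \<Rightarrow> nat list \<Rightarrow> nat list list \<Rightarrow> bool" where
  "is_tableau n lam T \<longleftrightarrow> length T = lam ! 0 \<and>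
     (\<forall>j<length T. length (T ! j) = col_len n lam (j + 1)) \<and>
     (\<forall>j<length T. set (T ! j) \<subseteq> {1..n}) \<and>
     (\<forall>j<length T. sorted_wrt (<) (T ! j)) \<and>
     (\<forall>j i. j + 1 < length T \<and> i < length (T ! (j + 1)) \<longrightarrow> T ! j ! i \<le> T ! (j + 1) ! i)"

definition is_key :: "nat \<Rightarrow> nat list \<Rightarrow> nat list list \<Rightarrow> bool" where
  "is_key n lam T \<longleftrightarrow> is_tableau n lam T \<and>
     (\<forall>j. j + 1 < length T \<longrightarrow> set (T ! (j + 1)) \<subseteq> set (T ! j))"

definition short_col_lens :: "nat \<Rightarrow> nat list \<Rightarrow> nat set" where
  "short_col_lens n lam = {q. \<exists>j\<in>{1..lam ! 0}. col_len n lam j = q \<and> q < n}"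

definition cols_of_len :: "nat \<Rightarrow> nat list \<Rightarrow> nat list list \<Rightarrow> nat \<Rightarrow> nat list set" where
  "cols_of_len n lam T q = {T ! (j - 1) | j. j \<in> {1..lam ! 0} \<and> col_len n lam j = q}"

definition vals_of_len :: "nat \<Rightarrow> nat list \<Rightarrow> nat list list \<Rightarrow> nat \<Rightarrow> nat set" where
  "vals_of_len n lam T q = \<Union>(set ` cols_of_len n lam T q)"

definition gapless_key :: "nat \<Rightarrow> nat list \<Rightarrow> nat list list \<Rightarrow> bool" where
  "gapless_key n lam T \<longleftrightarrow> is_key n lam T \<and>
     (\<forall>q\<in>short_col_lens n lam. \<forall>q'\<in>short_col_lens n lam.
        q < q' \<and> \<not> (\<exists>q''\<in>short_col_lens n lam. q < q'' \<and> q'' < q') \<longrightarrow>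
        (let D = vals_of_len n lam T q' - vals_of_len n lam T q;
             m = Max (vals_of_len n lam T q) in
         D \<noteq> {} \<longrightarrow> Min D \<le> m \<longrightarrow>
         (\<forall>c\<in>cols_of_len n lam T q'. {Min D..m} \<subseteq> set c)))"

definition distinct_short_cols :: "nat \<Rightarrow> nat list \<Rightarrow> bool" where
  "distinct_short_cols n lam \<longleftrightarrow> inj_on (col_len n lam) {1..lam ! 0} \<and>
     (\<forall>j\<in>{1..lam ! 0}. col_len n lam j < n)"

end

theory Submission
  imports Defs
begin

text \<open>All four numbers count, up to bijection, the chains {} = B_0 \<subset> B_1 \<subset> ... \<subset> B_k = [n]
  whose every step B \<subseteq> B' is gap-closed: each new element y \<in> B' - B lying below an old
  element x \<in> B is joined to it by the interval {y..x} \<subseteq> B'.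
  An ordered set partition corresponds to its chain of prefix unions, and a 312 occurrence whose
  middle entry lies in block h is exactly a failure of gap-closedness at step h.  Rightmost clump
  deletion is the same condition seen through the clumps of B'.  Reading the columns of a key with
  distinct column lengths below n from right to left gives such a chain, gaplessness again being
  gap-closedness of consecutive columns.  Finally an R-permutation \<pi> is recorded by the ordered
  set partition of its blocks \<pi>{q_h + 1..q_(h+1)}, which avoids 312 exactly when \<pi> is
  R-312-avoiding; conversely the block sizes recover R, and listing each block increasingly
  recovers \<pi>.\<close>

section \<open>Sorted lists and monotone maps\<close>

lemma nth_concat_sum_list_take:
  "h < length xss \<Longrightarrow> t < length (xss ! h) \<Longrightarrow>
    concat xss ! (sum_list (map length (take h xss)) + t) = xss ! h ! t"
proof (induction xss arbitrary: h)
  case (Cons xs xss)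
  then show ?case by (cases h) (auto simp: nth_append add.assoc)
qed simp

lemma sorted_nth_le_nth_filter:
  assumes "sorted xs" "i < length (filter P xs)"
  shows "xs ! i \<le> filter P xs ! i"
  using assms
proof (induction xs arbitrary: i)
  case (Cons x xs)
  show ?case
  proof (cases i)
    case 0
    have "filter P (x # xs) ! i \<in> set (x # xs)"
      using nth_mem[OF Cons.prems(2)] by (meson filter_is_subset subsetD)
    then show ?thesis using Cons.prems(1) 0 by auto
  next
    case (Suc k)
    show ?thesis
    proof (cases "P x")
      case True
      then show ?thesis using Cons Suc by simp
    next
      case False
      then have "xs ! k \<le> filter P xs ! k" using Cons Suc by simp
      also have "\<dots> \<le> filter P xs ! Suc k"
        using Cons.prems False Suc by (intro sorted_nth_mono) (simp_all add: sorted_wrt_filter)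
      finally show ?thesis using False Suc by simp
    qed
  qed
qed simp

lemma sorted_list_of_set_nth_le:
  assumes "finite A" "B \<subseteq> A" "i < card B"
  shows "sorted_list_of_set A ! i \<le> sorted_list_of_set B ! i"
proof -
  let ?ys = "filter (\<lambda>x. x \<in> B) (sorted_list_of_set A)"
  have "sorted_wrt (<) ?ys" by (simp add: sorted_wrt_filter)
  moreover have "set ?ys = B" using assms(1,2) by auto
  moreover have "finite B" using assms(1,2) finite_subset by blast
  ultimately have "sorted_list_of_set B = ?ys"
    using strict_sorted_equal[of "sorted_list_of_set B" ?ys] by simp
  moreover have "i < length ?ys" using calculation assms(3) by (metis length_sorted_list_of_set)
  ultimately show ?thesis using sorted_nth_le_nth_filter[of "sorted_list_of_set A" i] by simp
qed

lemma le_card_ge_iff: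
  fixes ls :: "nat \<Rightarrow> nat"
  assumes antimono: "\<And>j j'. j \<le> j' \<Longrightarrow> j' < m \<Longrightarrow> ls j' \<le> ls j" and c: "1 \<le> c" "c \<le> m"
  shows "c \<le> card {j. j < m \<and> i \<le> ls j} \<longleftrightarrow> i \<le> ls (c - 1)"
proof
  assume le_card: "c \<le> card {j. j < m \<and> i \<le> ls j}"
  show "i \<le> ls (c - 1)"
  proof (rule ccontr)
    assume "\<not> i \<le> ls (c - 1)"
    have "{j. j < m \<and> i \<le> ls j} \<subseteq> {..<c - 1}"
    proof
      fix j assume j: "j \<in> {j. j < m \<and> i \<le> ls j}"
      show "j \<in> {..<c - 1}"
      proof (rule ccontr)
        assume "j \<notin> {..<c - 1}"
        then have "ls j \<le> ls (c - 1)" using antimono[of "c - 1" j] j by simp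
        then show False using j \<open>\<not> i \<le> ls (c - 1)\<close> by simp
      qed
    qed
    then have "card {j. j < m \<and> i \<le> ls j} \<le> card {..<c - 1}" by (rule card_mono[rotated]) simp
    then show False using le_card c by simp
  qed
next
  assume "i \<le> ls (c - 1)"
  have "{..<c} \<subseteq> {j. j < m \<and> i \<le> ls j}"
  proof
    fix j assume "j \<in> {..<c}"
    then have "j < m" "ls (c - 1) \<le> ls j" using antimono[of j "c - 1"] c by auto
    then show "j \<in> {j. j < m \<and> i \<le> ls j}" using \<open>i \<le> ls (c - 1)\<close> by simp
  qed
  then have "card {..<c} \<le> card {j. j < m \<and> i \<le> ls j}" by (rule card_mono[rotated]) simp
  then show "c \<le> card {j. j < m \<and> i \<le> ls j}" by simp
qed

lemma card_less_image_strict_mono_on: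
  fixes f :: "'a::linorder \<Rightarrow> 'b::linorder"
  assumes "strict_mono_on A f" "x \<in> A"
  shows "card {y \<in> f ` A. y < f x} = card {z \<in> A. z < x}"
proof -
  have "{y \<in> f ` A. y < f x} = f ` {z \<in> A. z < x}"
    using strict_mono_on_less[OF assms(1) _ assms(2)] by auto
  moreover have "inj_on f {z \<in> A. z < x}"
    using strict_mono_on_imp_inj_on[OF assms(1)] by (rule inj_on_subset) auto
  ultimately show ?thesis by (simp add: card_image)
qed

text \<open>Each value of a strictly monotone map is fixed by its rank in the image.\<close>

lemma strict_mono_on_eq_if_image_eq:
  fixes f g :: "'a::linorder \<Rightarrow> 'b::linorder"
  assumes "finite A" "strict_mono_on A f" "strict_mono_on A g" "f ` A = g ` A" "x \<in> A"
  shows "f x = g x"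
proof (rule ccontr)
  have less_impossible: False
    if "u ` A = v ` A" "strict_mono_on A u" "strict_mono_on A v" "u x < v x" for u v :: "'a \<Rightarrow> 'b"
  proof -
    have "{y \<in> v ` A. y < u x} \<subset> {y \<in> v ` A. y < v x}" using that \<open>x \<in> A\<close> by auto
    then have "card {y \<in> v ` A. y < u x} < card {y \<in> v ` A. y < v x}"
      using \<open>finite A\<close> by (intro psubset_card_mono) auto
    then show False
      using that card_less_image_strict_mono_on[OF that(2) \<open>x \<in> A\<close>]
        card_less_image_strict_mono_on[OF that(3) \<open>x \<in> A\<close>] by simp
  qed
  assume "f x \<noteq> g x"
  then have "f x < g x \<or> g x < f x" by auto
  then show False using less_impossible[of f g] less_impossible[of g f] assms by metis
qed

section \<open>Gap-closed steps and clumps\<close>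

definition gap_closed_step :: "nat set \<Rightarrow> nat set \<Rightarrow> bool" where
  "gap_closed_step C C' \<longleftrightarrow> (\<forall>y\<in>C' - C. \<forall>x\<in>C. y < x \<longrightarrow> {y..x} \<subseteq> C')"

lemma gap_closed_step_iff_Min_Max:
  assumes "finite C'" "C \<noteq> {}" "C \<subseteq> C'"
  shows "gap_closed_step C C' \<longleftrightarrow>
    (C' - C \<noteq> {} \<longrightarrow> Min (C' - C) \<le> Max C \<longrightarrow> {Min (C' - C)..Max C} \<subseteq> C')"
proof -
  have fin: "finite C" "finite (C' - C)" using assms finite_subset by auto
  show ?thesis
  proof
    assume closed: "gap_closed_step C C'"
    show "C' - C \<noteq> {} \<longrightarrow> Min (C' - C) \<le> Max C \<longrightarrow> {Min (C' - C)..Max C} \<subseteq> C'"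
    proof (intro impI)
      assume "C' - C \<noteq> {}" "Min (C' - C) \<le> Max C"
      moreover have "Min (C' - C) \<in> C' - C" "Max C \<in> C"
        using Min_in[OF fin(2) \<open>C' - C \<noteq> {}\<close>] Max_in[OF fin(1) \<open>C \<noteq> {}\<close>] by blast+
      ultimately have "Min (C' - C) < Max C" by (metis DiffD2 order_neq_le_trans)
      with \<open>Min (C' - C) \<in> C' - C\<close> \<open>Max C \<in> C\<close> show "{Min (C' - C)..Max C} \<subseteq> C'"
        using closed unfolding gap_closed_step_def by blast
    qed
  next
    assume H: "C' - C \<noteq> {} \<longrightarrow> Min (C' - C) \<le> Max C \<longrightarrow> {Min (C' - C)..Max C} \<subseteq> C'"
    show "gap_closed_step C C'" unfolding gap_closed_step_def
    proof (intro ballI impI)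
      fix y x assume "y \<in> C' - C" "x \<in> C" "y < x"
      moreover have "Min (C' - C) \<le> y" "x \<le> Max C" using fin calculation by auto
      ultimately show "{y..x} \<subseteq> C'" using H by fastforce
    qed
  qed
qed

lemma gap_closed_step_atLeastAtMost:
  assumes "C \<subseteq> {1..n}"
  shows "gap_closed_step C {1..n}"
  unfolding gap_closed_step_def
proof (intro ballI impI subsetI)
  fix y x z assume "y \<in> {1..n} - C" "x \<in> C" "z \<in> {y..x}"
  then show "z \<in> {1..n}" using assms by auto
qed

definition chain_of_key :: "nat \<Rightarrow> nat list list \<Rightarrow> nat set list" where
  "chain_of_key n T = rev (map set T) @ [{1..n}]"

definition key_of_chain :: "nat set list \<Rightarrow> nat list list" where
  "key_of_chain Bs = map sorted_list_of_set (rev (butlast Bs))"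

lemma length_chain_of_key [simp]: "length (chain_of_key n T) = length T + 1"
  by (simp add: chain_of_key_def)

lemma nth_chain_of_key: "i < length T \<Longrightarrow> chain_of_key n T ! i = set (T ! (length T - Suc i))"
  by (simp add: chain_of_key_def nth_append rev_nth)

lemma nth_chain_of_key_length [simp]: "chain_of_key n T ! length T = {1..n}"
  by (simp add: chain_of_key_def nth_append)

lemma is_interval_Un:
  assumes "is_interval I" "is_interval J" "I \<inter> J \<noteq> {}"
  shows "is_interval (I \<union> J)"
proof -
  obtain a b c d where "I = {a..b}" "J = {c..d}" "a \<le> b" "c \<le> d"
    using assms(1,2) unfolding is_interval_def by blast
  with assms(3) have "I \<union> J = {min a c..max b d}" by auto
  then show ?thesis unfolding is_interval_def by (metis max.coboundedI1 min.coboundedI1 \<open>a \<le> b\<close>)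
qed

lemma clump_absorbs_interval:
  assumes "clump S L" "is_interval I" "I \<subseteq> S" "L \<inter> I \<noteq> {}"
  shows "I \<subseteq> L"
proof -
  have "is_interval (L \<union> I)" using assms is_interval_Un unfolding clump_def by blast
  then have "L \<union> I = L" using assms unfolding clump_def by blast
  then show ?thesis by blast
qed

lemma clump_unique:
  assumes "clump S L1" "clump S L2" "x \<in> L1" "x \<in> L2"
  shows "L1 = L2"
  using clump_absorbs_interval[OF assms(1)] clump_absorbs_interval[OF assms(2)] assms
  unfolding clump_def by blast

lemma ex_clump:
  assumes "finite S" "x \<in> S"
  shows "\<exists>L. clump S L \<and> x \<in> L"
proof -
  let ?I = "{I. is_interval I \<and> x \<in> I \<and> I \<subseteq> S}"
  have "finite ?I" using assms(1) by (rule finite_subset[rotated, OF finite_Pow_iff[THEN iffD2]]) auto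
  moreover have "{x..x} \<in> ?I" using assms(2) unfolding is_interval_def by (auto intro!: exI[of _ x])
  ultimately obtain L where "L \<in> ?I" "\<forall>I\<in>?I. L \<subseteq> I \<longrightarrow> L = I"
    using finite_has_maximal2 by meson
  then have "clump S L" unfolding clump_def by blast
  with \<open>L \<in> ?I\<close> show ?thesis by blast
qed

lemma clump_eq_atLeastAtMost:
  assumes "clump S L"
  shows "L = {Min L..Max L}" "Min L \<in> L"
proof -
  obtain a b where "a \<le> b" "L = {a..b}" using assms unfolding clump_def is_interval_def by blast
  moreover from this have "Min L = a" "Max L = b" by (auto intro!: Min_eqI Max_eqI)
  ultimately show "L = {Min L..Max L}" "Min L \<in> L" by auto
qed

lemma clump_less:
  assumes "clump S L1" "clump S L2" "L1 \<noteq> L2" "Min L1 \<le> Min L2" "x \<in> L1" "y \<in> L2"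
  shows "x < y"
proof (rule ccontr)
  assume "\<not> x < y"
  then have "Min L2 \<in> L1"
    using clump_eq_atLeastAtMost[OF assms(1)] clump_eq_atLeastAtMost[OF assms(2)] assms(4-6)
    by (metis atLeastAtMost_iff le_trans not_less)
  then show False using clump_unique assms(1-3) clump_eq_atLeastAtMost(2)[OF assms(2)] by blast
qed

lemma gap_closed_step_if_rightmost_clump_step:
  assumes "finite C'" "C \<subseteq> C'" "rightmost_clump_step C C'"
  shows "gap_closed_step C C'"
  unfolding gap_closed_step_def
proof (intro ballI impI)
  obtain Le where Le: "clump C' Le"
    and deleted: "C' - C \<subseteq> \<Union>{L. clump C' L \<and> Min L \<ge> Min Le}"
    and kept: "\<Union>{L. clump C' L \<and> Min L > Min Le} \<subseteq> C' - C"
    using assms(3) unfolding rightmost_clump_step_def by blast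
  fix y x assume y: "y \<in> C' - C" and x: "x \<in> C" and "y < x"
  obtain L where L: "clump C' L" "Min L \<ge> Min Le" "y \<in> L" using deleted y by blast
  obtain Lx where Lx: "clump C' Lx" "x \<in> Lx" using ex_clump assms(1,2) x by blast
  have "Min Lx \<le> Min L" using kept Lx x L(2) by force
  then have "Lx = L" using clump_less[OF Lx(1) L(1) _ _ Lx(2) L(3)] \<open>y < x\<close> by force
  then have "{y..x} \<subseteq> L"
    using clump_eq_atLeastAtMost[OF L(1)] L(3) Lx(2) by (metis atLeastAtMost_iff subsetI order_trans)
  then show "{y..x} \<subseteq> C'" using L(1) unfolding clump_def by blast
qed

text \<open>The clump to be split is the one containing \<open>Max C\<close>.\<close>

lemma rightmost_clump_step_if_gap_closed_step:
  assumes "finite C'" "C \<noteq> {}" "C \<subseteq> C'" "gap_closed_step C C'"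
  shows "rightmost_clump_step C C'"
proof -
  define x0 where "x0 = Max C"
  have "finite C" using assms(1,3) finite_subset by blast
  then have x0: "x0 \<in> C" "\<And>z. z \<in> C \<Longrightarrow> z \<le> x0"
    unfolding x0_def using assms(2) by auto
  obtain Le where Le: "clump C' Le" "x0 \<in> Le" using ex_clump assms(1,3) x0(1) by blast
  have "C' - C \<subseteq> \<Union>{L. clump C' L \<and> Min L \<ge> Min Le}"
  proof
    fix y assume y: "y \<in> C' - C"
    obtain Ly where Ly: "clump C' Ly" "y \<in> Ly" using ex_clump assms(1) y by blast
    have "Min Le \<le> Min Ly"
    proof (rule ccontr)
      assume "\<not> Min Le \<le> Min Ly"
      then have "Ly \<noteq> Le" by auto
      then have "y < x0" using clump_less[OF Ly(1) Le(1) _ _ Ly(2) Le(2)] \<open>\<not> Min Le \<le> Min Ly\<close> by simp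
      then have "{y..x0} \<subseteq> C'" using assms(4) y x0(1) unfolding gap_closed_step_def by blast
      moreover have "is_interval {y..x0}"
        using \<open>y < x0\<close> unfolding is_interval_def by (auto intro!: exI[of _ y] exI[of _ x0])
      moreover have "Ly \<inter> {y..x0} \<noteq> {}" using Ly(2) \<open>y < x0\<close> by auto
      ultimately have "x0 \<in> Ly" using clump_absorbs_interval[OF Ly(1)] \<open>y < x0\<close> by fastforce
      then show False using clump_unique[OF Ly(1) Le(1) _ Le(2)] \<open>Ly \<noteq> Le\<close> by blast
    qed
    then show "y \<in> \<Union>{L. clump C' L \<and> Min L \<ge> Min Le}" using Ly by blast
  qed
  moreover have "\<Union>{L. clump C' L \<and> Min L > Min Le} \<subseteq> C' - C"
  proof
    fix z assume "z \<in> \<Union>{L. clump C' L \<and> Min L > Min Le}"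
    then obtain L where L: "clump C' L" "Min L > Min Le" "z \<in> L" by blast
    then have "x0 < z" using clump_less[OF Le(1) L(1) _ _ Le(2) L(3)] by (metis less_imp_le less_irrefl)
    then have "z \<notin> C" using x0(2) by (meson not_le)
    then show "z \<in> C' - C" using L unfolding clump_def by blast
  qed
  ultimately show ?thesis unfolding rightmost_clump_step_def using Le(1) by blast
qed

lemma rightmost_clump_step_iff_gap_closed_step:
  assumes "finite C'" "C \<noteq> {}" "C \<subseteq> C'"
  shows "rightmost_clump_step C C' \<longleftrightarrow> gap_closed_step C C'"
  using assms gap_closed_step_if_rightmost_clump_step rightmost_clump_step_if_gap_closed_step
  by blast

section \<open>Chains\<close>

definition strict_chain :: "nat \<Rightarrow> nat set list \<Rightarrow> bool" where
  "strict_chain n Bs \<longleftrightarrow> length Bs \<ge> 1 \<and> {} \<subset> Bs ! 0 \<and>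
     (\<forall>i. i + 1 < length Bs \<longrightarrow> Bs ! i \<subset> Bs ! (i + 1)) \<and> last Bs = {1..n}"

definition gap_closed_chain :: "nat \<Rightarrow> nat set list \<Rightarrow> bool" where
  "gap_closed_chain n Bs \<longleftrightarrow> strict_chain n Bs \<and>
     (\<forall>h\<in>{1..length Bs - 1}. gap_closed_step (Bs ! (h - 1)) (Bs ! h))"

context
  fixes n :: nat and Bs :: "nat set list"
  assumes chain: "strict_chain n Bs"
begin

lemma strict_chain_nonempty: "Bs \<noteq> []"
  using chain unfolding strict_chain_def by auto

lemma strict_chain_last: "Bs ! (length Bs - 1) = {1..n}"
  using chain strict_chain_nonempty unfolding strict_chain_def by (simp add: last_conv_nth)

lemma strict_chain_less:
  assumes "i < j" "j < length Bs"
  shows "Bs ! i \<subset> Bs ! j"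
  using assms
proof (induction j)
  case (Suc j)
  then have "Bs ! j \<subset> Bs ! Suc j" using chain unfolding strict_chain_def by simp
  show ?case
  proof (cases "i = j")
    case False
    with Suc have "Bs ! i \<subset> Bs ! j" by simp
    from this \<open>Bs ! j \<subset> Bs ! Suc j\<close> show ?thesis by (rule psubset_trans)
  qed (use \<open>Bs ! j \<subset> Bs ! Suc j\<close> in simp)
qed simp

lemma strict_chain_mono: "i \<le> j \<Longrightarrow> j < length Bs \<Longrightarrow> Bs ! i \<subseteq> Bs ! j"
  by (metis strict_chain_less le_neq_implies_less order_refl psubset_imp_subset)

lemma strict_chain_subset: "i < length Bs \<Longrightarrow> Bs ! i \<subseteq> {1..n}"
  using strict_chain_mono[of i "length Bs - 1"] strict_chain_last by simp

lemma strict_chain_nth_nonempty: "i < length Bs \<Longrightarrow> Bs ! i \<noteq> {}"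
  using strict_chain_mono[of 0 i] chain unfolding strict_chain_def by auto

lemma finite_chain_nth: "i < length Bs \<Longrightarrow> finite (Bs ! i)"
  using finite_subset[OF strict_chain_subset] by blast

lemma card_chain_less: "i < j \<Longrightarrow> j < length Bs \<Longrightarrow> card (Bs ! i) < card (Bs ! j)"
  using strict_chain_less finite_chain_nth by (intro psubset_card_mono) auto

lemma card_chain_bounds: "i < length Bs - 1 \<Longrightarrow> 1 \<le> card (Bs ! i) \<and> card (Bs ! i) < n"
  using strict_chain_nth_nonempty[of i] finite_chain_nth[of i] card_chain_less[of i "length Bs - 1"]
    strict_chain_last by (simp add: Suc_le_eq card_gt_0_iff)

end

lemma rcd_chain_iff_gap_closed_chain: "rcd_chain n Bs \<longleftrightarrow> gap_closed_chain n Bs"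
proof -
  have "rightmost_clump_step (Bs ! (h - 1)) (Bs ! h) \<longleftrightarrow> gap_closed_step (Bs ! (h - 1)) (Bs ! h)"
    if chain: "strict_chain n Bs" and h: "h \<in> {1..length Bs - 1}" for h
  proof (rule rightmost_clump_step_iff_gap_closed_step)
    have "h < length Bs" using h by auto
    then show "finite (Bs ! h)" "Bs ! (h - 1) \<noteq> {}" "Bs ! (h - 1) \<subseteq> Bs ! h"
      using finite_chain_nth[OF chain, of h]
        strict_chain_nth_nonempty[OF chain, of "h - 1"] strict_chain_mono[OF chain, of "h - 1" h]
      by simp_all
  qed
  moreover have "rcd_chain n Bs \<longleftrightarrow> strict_chain n Bs \<and>
      (\<forall>h\<in>{1..length Bs - 1}. rightmost_clump_step (Bs ! (h - 1)) (Bs ! h))"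
    unfolding rcd_chain_def strict_chain_def by (simp only: conj_assoc)
  ultimately show ?thesis unfolding gap_closed_chain_def by blast
qed

section \<open>Ordered set partitions\<close>

definition prefix_unions :: "nat set list \<Rightarrow> nat set list" where
  "prefix_unions As = map (\<lambda>h. \<Union>i\<le>h. As ! i) [0..<length As]"

definition successive_differences :: "nat set list \<Rightarrow> nat set list" where
  "successive_differences Bs =
     map (\<lambda>h. if h = 0 then Bs ! 0 else Bs ! h - Bs ! (h - 1)) [0..<length Bs]"

lemma length_prefix_unions [simp]: "length (prefix_unions As) = length As"
  by (simp add: prefix_unions_def)

lemma nth_prefix_unions [simp]: "h < length As \<Longrightarrow> prefix_unions As ! h = (\<Union>i\<le>h. As ! i)"
  by (simp add: prefix_unions_def)

lemma length_successive_differences [simp]: "length (successive_differences Bs) = length Bs"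
  by (simp add: successive_differences_def)

lemma nth_successive_differences:
  "h < length Bs \<Longrightarrow> successive_differences Bs ! h = (if h = 0 then Bs ! 0 else Bs ! h - Bs ! (h - 1))"
  by (simp add: successive_differences_def)

definition pattern_312_at :: "nat set list \<Rightarrow> nat \<Rightarrow> bool" where
  "pattern_312_at As h \<longleftrightarrow> (\<exists>i l a b c. i < h \<and> h < l \<and> l < length As \<and>
     a \<in> As ! i \<and> b \<in> As ! h \<and> c \<in> As ! l \<and> b < c \<and> c < a)"

lemma osp_avoids_312_iff_no_pattern_312_at:
  "osp_avoids_312 As \<longleftrightarrow> (\<forall>h\<in>{1..length As - 1}. \<not> pattern_312_at As h)"
proof
  assume "osp_avoids_312 As"
  then show "\<forall>h\<in>{1..length As - 1}. \<not> pattern_312_at As h"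
    unfolding osp_avoids_312_def pattern_312_at_def by blast
next
  assume no_pattern: "\<forall>h\<in>{1..length As - 1}. \<not> pattern_312_at As h"
  show "osp_avoids_312 As" unfolding osp_avoids_312_def
  proof (intro notI, elim exE conjE)
    fix i j l a b c assume "i < j" "j < l" "l < length As"
      "a \<in> As ! i" "b \<in> As ! j" "c \<in> As ! l" "b < c" "c < a"
    moreover from this have "j \<in> {1..length As - 1}" by auto
    ultimately show False using no_pattern unfolding pattern_312_at_def by blast
  qed
qed

context
  fixes n :: nat and As :: "nat set list"
  assumes osp: "ordered_set_partition n As"
begin

lemma osp_nonempty: "As \<noteq> []"
  using osp unfolding ordered_set_partition_def by auto

lemma osp_block_nonempty: "i < length As \<Longrightarrow> As ! i \<noteq> {}"
  using osp unfolding ordered_set_partition_def by blast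

lemma osp_block_subset: "i < length As \<Longrightarrow> As ! i \<subseteq> {1..n}"
  using osp nth_mem unfolding ordered_set_partition_def by blast

lemma osp_ex_block:
  assumes "x \<in> {1..n}"
  shows "\<exists>i<length As. x \<in> As ! i"
proof -
  have "x \<in> \<Union>(set As)" using osp assms unfolding ordered_set_partition_def by simp
  then show ?thesis by (auto simp: in_set_conv_nth)
qed

lemma osp_block_unique: "i < length As \<Longrightarrow> j < length As \<Longrightarrow> x \<in> As ! i \<Longrightarrow> x \<in> As ! j \<Longrightarrow> i = j"
  using osp unfolding ordered_set_partition_def by (metis disjoint_iff nat_neq_iff)

lemma prefix_unions_prev: "0 < h \<Longrightarrow> h < length As \<Longrightarrow> prefix_unions As ! (h - 1) = (\<Union>i<h. As ! i)"
  by (auto simp: less_Suc_eq_le[symmetric])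

lemma prefix_unions_diff:
  assumes "0 < h" "h < length As"
  shows "prefix_unions As ! h - prefix_unions As ! (h - 1) = As ! h"
proof -
  have "x \<notin> As ! i" if "i < h" "x \<in> As ! h" for i x
    using osp_block_unique[of i h x] that assms by fastforce
  then show ?thesis unfolding prefix_unions_prev[OF assms] using assms by (auto simp: le_less)
qed

lemma strict_chain_prefix_unions: "strict_chain n (prefix_unions As)"
  unfolding strict_chain_def
proof (intro conjI allI impI)
  show "1 \<le> length (prefix_unions As)" using osp_nonempty by (simp add: Suc_le_eq)
  show "{} \<subset> prefix_unions As ! 0" using osp_nonempty osp_block_nonempty[of 0] by auto
  show "prefix_unions As ! i \<subset> prefix_unions As ! (i + 1)" if "i + 1 < length (prefix_unions As)" for i
  proof -
    have "prefix_unions As ! i \<subseteq> prefix_unions As ! (i + 1)"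
      using that by (simp add: UN_mono)
    moreover have "prefix_unions As ! (i + 1) - prefix_unions As ! i \<noteq> {}"
      using prefix_unions_diff[of "i + 1"] osp_block_nonempty[of "i + 1"] that by simp
    ultimately show ?thesis by blast
  qed
  have "last (prefix_unions As) = prefix_unions As ! (length As - 1)"
    using osp_nonempty by (metis last_conv_nth length_0_conv length_prefix_unions)
  also have "\<dots> = (\<Union>i<length As. As ! i)"
    using osp_nonempty by (simp add: lessThan_Suc_atMost[symmetric])
  also have "\<dots> = {1..n}" using osp_block_subset osp_ex_block by blast
  finally show "last (prefix_unions As) = {1..n}" .
qed

lemma successive_differences_prefix_unions: "successive_differences (prefix_unions As) = As"
proof (rule nth_equalityI)
  fix h assume "h < length (successive_differences (prefix_unions As))"
  then have "h < length As" by simp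
  then show "successive_differences (prefix_unions As) ! h = As ! h"
    using prefix_unions_diff[of h] by (cases "h = 0") (simp_all add: nth_successive_differences)
qed simp

lemma no_pattern_312_at_if_gap_closed_step:
  assumes h: "0 < h" "h < length As"
    and closed: "gap_closed_step (prefix_unions As ! (h - 1)) (prefix_unions As ! h)"
  shows "\<not> pattern_312_at As h"
proof
  assume "pattern_312_at As h"
  then obtain i l a b c where w: "i < h" "h < l" "l < length As"
    "a \<in> As ! i" "b \<in> As ! h" "c \<in> As ! l" "b < c" "c < a"
    unfolding pattern_312_at_def by blast
  have "b \<in> prefix_unions As ! h - prefix_unions As ! (h - 1)"
    using prefix_unions_diff[OF h] w(5) by simp
  moreover have "a \<in> prefix_unions As ! (h - 1)" using prefix_unions_prev[OF h] w(1,4) by auto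
  ultimately have "{b..a} \<subseteq> prefix_unions As ! h"
    using closed w(7,8) unfolding gap_closed_step_def by (meson order.strict_trans)
  then have "c \<in> (\<Union>i\<le>h. As ! i)" using w(7,8) h(2) by (simp add: subset_iff)
  then obtain i' where "i' \<le> h" "c \<in> As ! i'" by blast
  then show False using osp_block_unique[of i' l c] w(2,3,6) h(2) by simp
qed

lemma gap_closed_step_if_no_pattern_312_at:
  assumes h: "0 < h" "h < length As" and no_pattern: "\<not> pattern_312_at As h"
  shows "gap_closed_step (prefix_unions As ! (h - 1)) (prefix_unions As ! h)"
  unfolding gap_closed_step_def
proof (intro ballI impI subsetI)
  fix y x z assume y: "y \<in> prefix_unions As ! h - prefix_unions As ! (h - 1)"
    and x: "x \<in> prefix_unions As ! (h - 1)" and "y < x" and z: "z \<in> {y..x}"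
  have yh: "y \<in> As ! h" using y by (simp only: prefix_unions_diff[OF h])
  obtain i where i: "i < h" "x \<in> As ! i" using x prefix_unions_prev[OF h] by auto
  have "y \<in> {1..n}" "x \<in> {1..n}"
    using osp_block_subset[of h] osp_block_subset[of i] yh i h by auto
  then have "z \<in> {1..n}" using z by auto
  then obtain l where l: "l < length As" "z \<in> As ! l" using osp_ex_block by blast
  show "z \<in> prefix_unions As ! h"
  proof (cases "l \<le> h")
    case True
    then show ?thesis using l h by auto
  next
    case False
    have "z \<noteq> y" using osp_block_unique[of l h z] l yh h(2) False by auto
    moreover have "z \<noteq> x" using osp_block_unique[of l i z] l i h(2) False by auto
    ultimately have "y < z" "z < x" using z by auto
    with no_pattern have False using i yh l False unfolding pattern_312_at_def by (meson not_le)
    then show ?thesis ..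
  qed
qed

lemma osp_avoids_312_iff_gap_closed_chain:
  "osp_avoids_312 As \<longleftrightarrow> gap_closed_chain n (prefix_unions As)"
proof -
  have "gap_closed_step (prefix_unions As ! (h - 1)) (prefix_unions As ! h) \<longleftrightarrow> \<not> pattern_312_at As h"
    if "h \<in> {1..length As - 1}" for h
    using that no_pattern_312_at_if_gap_closed_step gap_closed_step_if_no_pattern_312_at by auto
  then show ?thesis using strict_chain_prefix_unions
    unfolding gap_closed_chain_def osp_avoids_312_iff_no_pattern_312_at by simp
qed

end

context
  fixes n :: nat and Bs :: "nat set list"
  assumes chain: "strict_chain n Bs"
begin

lemma prefix_unions_successive_differences: "prefix_unions (successive_differences Bs) = Bs"
proof (rule nth_equalityI)
  fix h assume "h < length (prefix_unions (successive_differences Bs))"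
  then have "h < length Bs" by simp
  then have "(\<Union>i\<le>h. successive_differences Bs ! i) = Bs ! h"
  proof (induction h)
    case (Suc h)
    then show ?case
      using strict_chain_mono[OF chain, of h "Suc h"]
      by (auto simp: atMost_Suc nth_successive_differences)
  qed (simp add: nth_successive_differences)
  then show "prefix_unions (successive_differences Bs) ! h = Bs ! h" using \<open>h < length Bs\<close> by simp
qed simp

lemma osp_successive_differences: "ordered_set_partition n (successive_differences Bs)"
  unfolding ordered_set_partition_def
proof (intro conjI allI impI)
  show "1 \<le> length (successive_differences Bs)"
    using chain unfolding strict_chain_def by simp
  show "successive_differences Bs ! i \<noteq> {}" if "i < length (successive_differences Bs)" for i
    using that strict_chain_nth_nonempty[OF chain] strict_chain_less[OF chain, of "i - 1" i]
    by (auto simp: nth_successive_differences)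
  show "successive_differences Bs ! i \<inter> successive_differences Bs ! j = {}"
    if ij: "i < j \<and> j < length (successive_differences Bs)" for i j
  proof -
    have "i \<le> j - 1" "j - 1 < length Bs" using ij by auto
    then have "successive_differences Bs ! i \<subseteq> Bs ! (j - 1)"
      using strict_chain_mono[OF chain] by (auto simp: nth_successive_differences)
    then show ?thesis using ij by (auto simp: nth_successive_differences)
  qed
  let ?D = "successive_differences Bs"
  have "\<Union>(set ?D) = (\<Union>i<length Bs. ?D ! i)"
    by (auto simp: in_set_conv_nth) (metis length_successive_differences nth_mem)
  also have "\<dots> = prefix_unions ?D ! (length Bs - 1)"
    using strict_chain_nonempty[OF chain] by (simp add: lessThan_Suc_atMost[symmetric])
  also have "\<dots> = {1..n}"
    using prefix_unions_successive_differences strict_chain_last[OF chain] by simp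
  finally show "\<Union>(set ?D) = {1..n}" .
qed

end

lemma card_avoiding_osp_eq_card_rcd_chain:
  "card {As. ordered_set_partition n As \<and> osp_avoids_312 As} = card {Bs. rcd_chain n Bs}"
proof (rule bij_betw_same_card[of prefix_unions])
  show "bij_betw prefix_unions {As. ordered_set_partition n As \<and> osp_avoids_312 As} {Bs. rcd_chain n Bs}"
    unfolding rcd_chain_iff_gap_closed_chain
  proof (rule bij_betw_byWitness[where f' = successive_differences])
    show "\<forall>As\<in>{As. ordered_set_partition n As \<and> osp_avoids_312 As}.
        successive_differences (prefix_unions As) = As"
      using successive_differences_prefix_unions by blast
    show "\<forall>Bs\<in>{Bs. gap_closed_chain n Bs}. prefix_unions (successive_differences Bs) = Bs"
      using prefix_unions_successive_differences unfolding gap_closed_chain_def by blast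
    show "prefix_unions ` {As. ordered_set_partition n As \<and> osp_avoids_312 As}
        \<subseteq> {Bs. gap_closed_chain n Bs}"
      using osp_avoids_312_iff_gap_closed_chain by blast
    show "successive_differences ` {Bs. gap_closed_chain n Bs}
        \<subseteq> {As. ordered_set_partition n As \<and> osp_avoids_312 As}"
    proof (rule image_subsetI)
      fix Bs assume "Bs \<in> {Bs. gap_closed_chain n Bs}"
      then have "gap_closed_chain n Bs" and chain: "strict_chain n Bs"
        unfolding gap_closed_chain_def by auto
      moreover have osp: "ordered_set_partition n (successive_differences Bs)"
        using osp_successive_differences[OF chain] .
      ultimately show "successive_differences Bs \<in> {As. ordered_set_partition n As \<and> osp_avoids_312 As}"
        using osp_avoids_312_iff_gap_closed_chain[OF osp]
          prefix_unions_successive_differences[OF chain] by simp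
    qed
  qed
qed

section \<open>Keys and chains\<close>

lemma col_len_antimono: "j \<le> j' \<Longrightarrow> col_len n lam j' \<le> col_len n lam j"
  unfolding col_len_def by (rule card_mono) auto

lemma col_len_pos:
  assumes "1 \<le> n" "j \<le> lam ! 0"
  shows "1 \<le> col_len n lam j"
proof -
  have "1 \<in> {i\<in>{1..n}. lam ! (i - 1) \<ge> j}" using assms by simp
  then have "{i\<in>{1..n}. lam ! (i - 1) \<ge> j} \<noteq> {}" by blast
  then show ?thesis unfolding col_len_def by (simp add: Suc_leI card_gt_0_iff)
qed

definition gapless_between :: "nat \<Rightarrow> nat list \<Rightarrow> nat list list \<Rightarrow> nat \<Rightarrow> nat \<Rightarrow> bool" where
  "gapless_between n lam T q q' \<longleftrightarrow>
    (let D = vals_of_len n lam T q' - vals_of_len n lam T q; m = Max (vals_of_len n lam T q) in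
      D \<noteq> {} \<longrightarrow> Min D \<le> m \<longrightarrow> (\<forall>c\<in>cols_of_len n lam T q'. {Min D..m} \<subseteq> set c))"

lemma gapless_key_iff_gapless_between:
  "gapless_key n lam T \<longleftrightarrow> is_key n lam T \<and>
    (\<forall>q\<in>short_col_lens n lam. \<forall>q'\<in>short_col_lens n lam.
      q < q' \<and> \<not> (\<exists>q''\<in>short_col_lens n lam. q < q'' \<and> q'' < q') \<longrightarrow> gapless_between n lam T q q')"
  unfolding gapless_key_def gapless_between_def ..

locale distinct_columns_key =
  fixes n :: nat and lam :: "nat list" and T :: "nat list list"
  assumes n_pos: "1 \<le> n" and distinct_columns: "distinct_short_cols n lam" and key: "is_key n lam T"
begin

text \<open>Columns of \<open>T\<close> are indexed from 0, those of \<open>lam\<close> from 1.\<close>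

definition height :: "nat \<Rightarrow> nat" where
  "height j = col_len n lam (j + 1)"

lemma tableau: "is_tableau n lam T"
  using key unfolding is_key_def by simp

lemma lam_0: "lam ! 0 = length T"
  using tableau unfolding is_tableau_def by simp

lemma length_column: "j < length T \<Longrightarrow> length (T ! j) = height j"
  using tableau unfolding is_tableau_def height_def by simp

lemma sorted_column: "j < length T \<Longrightarrow> sorted_wrt (<) (T ! j)"
  using tableau unfolding is_tableau_def by simp

lemma column_subset: "j < length T \<Longrightarrow> set (T ! j) \<subseteq> {1..n}"
  using tableau unfolding is_tableau_def by simp

lemma column_nested: "j + 1 < length T \<Longrightarrow> set (T ! (j + 1)) \<subseteq> set (T ! j)"
  using key unfolding is_key_def by simp

lemma height_pos: "j < length T \<Longrightarrow> 1 \<le> height j"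
  unfolding height_def using col_len_pos[OF n_pos, of "j + 1" lam] lam_0 by simp

lemma height_less: "j < length T \<Longrightarrow> height j < n"
  unfolding height_def using distinct_columns lam_0 unfolding distinct_short_cols_def by simp

lemma height_strict_antimono:
  assumes "j < j'" "j' < length T"
  shows "height j' < height j"
proof -
  have "j' + 1 \<in> {1..lam ! 0}" "j + 1 \<in> {1..lam ! 0}" using assms lam_0 by auto
  then have "height j' \<noteq> height j"
    using distinct_columns assms unfolding distinct_short_cols_def inj_on_def height_def by fastforce
  moreover have "height j' \<le> height j" unfolding height_def using col_len_antimono assms by simp
  ultimately show ?thesis by simp
qed

lemma height_le_iff: "j < length T \<Longrightarrow> j' < length T \<Longrightarrow> height j' \<le> height j \<longleftrightarrow> j \<le> j'"
  using height_strict_antimono by (metis le_less not_less)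

lemma card_column: "j < length T \<Longrightarrow> card (set (T ! j)) = height j"
  using sorted_column length_column by (metis distinct_card strict_sorted_iff)

lemma column_nonempty: "j < length T \<Longrightarrow> set (T ! j) \<noteq> {}"
  using card_column height_pos by fastforce

lemma short_col_lens_eq: "short_col_lens n lam = height ` {..<length T}"
proof (intro equalityI subsetI)
  fix q assume "q \<in> short_col_lens n lam"
  then obtain j where "j \<in> {1..lam ! 0}" "col_len n lam j = q" unfolding short_col_lens_def by blast
  then have "q = height (j - 1)" "j - 1 < length T" using lam_0 unfolding height_def by auto
  then show "q \<in> height ` {..<length T}" by blast
next
  fix q assume "q \<in> height ` {..<length T}"
  then obtain j where "j < length T" "q = height j" by blast
  then have "j + 1 \<in> {1..lam ! 0}" "col_len n lam (j + 1) = q" "q < n"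
    using lam_0 height_less unfolding height_def by auto
  then show "q \<in> short_col_lens n lam" unfolding short_col_lens_def by blast
qed

lemma cols_of_len_height: "j < length T \<Longrightarrow> cols_of_len n lam T (height j) = {T ! j}"
proof (intro equalityI subsetI)
  fix c assume j: "j < length T" and "c \<in> cols_of_len n lam T (height j)"
  then obtain i where i: "c = T ! (i - 1)" "i \<in> {1..lam ! 0}" "col_len n lam i = height j"
    unfolding cols_of_len_def by blast
  then have "height (i - 1) = height j" "i - 1 < length T" using lam_0 unfolding height_def by auto
  then have "i - 1 = j" using height_le_iff j by (metis le_antisym order_refl)
  then show "c \<in> {T ! j}" using i by simp
next
  fix c assume "j < length T" "c \<in> {T ! j}"
  then have "c = T ! ((j + 1) - 1)" "j + 1 \<in> {1..lam ! 0}" "col_len n lam (j + 1) = height j"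
    using lam_0 unfolding height_def by auto
  then show "c \<in> cols_of_len n lam T (height j)" unfolding cols_of_len_def by blast
qed

lemma vals_of_len_height: "j < length T \<Longrightarrow> vals_of_len n lam T (height j) = set (T ! j)"
  unfolding vals_of_len_def using cols_of_len_height by simp

lemma gapless_between_iff_gap_closed_step:
  assumes j: "j + 1 < length T"
  shows "gapless_between n lam T (height (j + 1)) (height j) \<longleftrightarrow>
    gap_closed_step (set (T ! (j + 1))) (set (T ! j))"
  using vals_of_len_height[of j] vals_of_len_height[of "j + 1"] cols_of_len_height[of j] j
    gap_closed_step_iff_Min_Max[of "set (T ! j)" "set (T ! (j + 1))"]
    column_nested[OF j] column_nonempty[of "j + 1"]
  by (simp add: gapless_between_def Let_def)

lemma consecutive_short_col_lens_iff:
  "q \<in> short_col_lens n lam \<and> q' \<in> short_col_lens n lam \<and> q < q' \<and>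
     \<not> (\<exists>q''\<in>short_col_lens n lam. q < q'' \<and> q'' < q')
   \<longleftrightarrow> (\<exists>j. j + 1 < length T \<and> q = height (j + 1) \<and> q' = height j)"
proof
  assume H: "q \<in> short_col_lens n lam \<and> q' \<in> short_col_lens n lam \<and> q < q' \<and>
    \<not> (\<exists>q''\<in>short_col_lens n lam. q < q'' \<and> q'' < q')"
  then obtain a b where a: "a < length T" "q = height a" and b: "b < length T" "q' = height b"
    using short_col_lens_eq by auto
  have "\<not> height b \<le> height a" using H a b by simp
  then have "b < a" using height_le_iff[OF a(1) b(1)] by simp
  moreover have "\<not> b + 1 < a"
  proof
    assume "b + 1 < a"
    then have "height a < height (b + 1)" "height (b + 1) < height b"
      using height_strict_antimono a b by auto
    moreover have "height (b + 1) \<in> short_col_lens n lam" using short_col_lens_eq \<open>b + 1 < a\<close> a by auto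
    ultimately show False using H a b by blast
  qed
  ultimately have "a = b + 1" by simp
  then show "\<exists>j. j + 1 < length T \<and> q = height (j + 1) \<and> q' = height j"
    using a b by (intro exI[of _ b]) simp
next
  assume "\<exists>j. j + 1 < length T \<and> q = height (j + 1) \<and> q' = height j"
  then obtain j where j: "j + 1 < length T" "q = height (j + 1)" "q' = height j" by blast
  have "\<not> (\<exists>q''\<in>short_col_lens n lam. q < q'' \<and> q'' < q')"
  proof
    assume "\<exists>q''\<in>short_col_lens n lam. q < q'' \<and> q'' < q'"
    then obtain l where l: "l < length T" "height (j + 1) < height l" "height l < height j"
      using short_col_lens_eq j by auto
    then have "l < j + 1" using height_le_iff[OF j(1) l(1)] by simp
    moreover have "j < l" using l height_le_iff[OF l(1), of j] j(1) by simp
    ultimately show False by simp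
  qed
  moreover have "q \<in> short_col_lens n lam" "q' \<in> short_col_lens n lam"
    using j short_col_lens_eq by auto
  moreover have "q < q'" using j height_strict_antimono[of j "j + 1"] by simp
  ultimately show "q \<in> short_col_lens n lam \<and> q' \<in> short_col_lens n lam \<and> q < q' \<and>
    \<not> (\<exists>q''\<in>short_col_lens n lam. q < q'' \<and> q'' < q')" by blast
qed

lemma gapless_key_iff:
  "gapless_key n lam T \<longleftrightarrow> (\<forall>j. j + 1 < length T \<longrightarrow> gap_closed_step (set (T ! (j + 1))) (set (T ! j)))"
proof -
  let ?S = "short_col_lens n lam"
  have "gapless_key n lam T \<longleftrightarrow> (\<forall>q q'. q \<in> ?S \<and> q' \<in> ?S \<and> q < q' \<and>
      \<not> (\<exists>q''\<in>?S. q < q'' \<and> q'' < q') \<longrightarrow> gapless_between n lam T q q')"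
    unfolding gapless_key_iff_gapless_between using key by blast
  also have "\<dots> \<longleftrightarrow> (\<forall>j. j + 1 < length T \<longrightarrow> gapless_between n lam T (height (j + 1)) (height j))"
    unfolding consecutive_short_col_lens_iff by blast
  also have "\<dots> \<longleftrightarrow> (\<forall>j. j + 1 < length T \<longrightarrow> gap_closed_step (set (T ! (j + 1))) (set (T ! j)))"
    using gapless_between_iff_gap_closed_step by blast
  finally show ?thesis .
qed

lemma key_of_chain_chain_of_key: "key_of_chain (chain_of_key n T) = T"
proof -
  have "key_of_chain (chain_of_key n T) = map (sorted_list_of_set \<circ> set) T"
    by (simp add: key_of_chain_def chain_of_key_def)
  also have "\<dots> = T"
    by (rule map_idI) (metis comp_apply in_set_conv_nth sorted_column
      sorted_list_of_set.idem_if_sorted_distinct strict_sorted_iff subset_UNIV)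
  finally show ?thesis .
qed

lemma strict_chain_of_key: "strict_chain n (chain_of_key n T)"
  unfolding strict_chain_def
proof (intro conjI allI impI)
  let ?B = "chain_of_key n T"
  show "1 \<le> length ?B" by simp
  show "{} \<subset> ?B ! 0"
  proof (cases "T = []")
    case True
    then show ?thesis using n_pos nth_chain_of_key_length[of n T] by auto
  next
    case False
    then show ?thesis using nth_chain_of_key[of 0] column_nonempty[of "length T - 1"] by auto
  qed
  show "?B ! i \<subset> ?B ! (i + 1)" if "i + 1 < length ?B" for i
  proof (cases "i + 1 = length T")
    case True
    then have T0: "0 < length T" by linarith
    from True have "?B ! i = set (T ! 0)" "?B ! (i + 1) = {1..n}" using nth_chain_of_key[of i] by auto
    moreover have "card (set (T ! 0)) < card {1..n}"
      using card_column[OF T0] height_less[OF T0] by simp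
    ultimately show ?thesis using column_subset[OF T0] by (metis less_irrefl psubsetI)
  next
    case False
    define j where "j = length T - Suc (i + 1)"
    have j: "j + 1 < length T" "?B ! i = set (T ! (j + 1))" "?B ! (i + 1) = set (T ! j)"
      using nth_chain_of_key[of i] nth_chain_of_key[of "i + 1"] that False unfolding j_def
      by (auto simp: Suc_diff_Suc)
    moreover have "card (set (T ! (j + 1))) < card (set (T ! j))"
      using card_column height_strict_antimono j(1) by simp
    ultimately show ?thesis using column_nested by (metis less_irrefl psubsetI)
  qed
  show "last ?B = {1..n}" by (simp add: chain_of_key_def)
qed

lemma gap_closed_chain_of_key:
  assumes "gapless_key n lam T"
  shows "gap_closed_chain n (chain_of_key n T)"
  unfolding gap_closed_chain_def
proof (intro conjI ballI strict_chain_of_key)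
  let ?B = "chain_of_key n T"
  fix h assume "h \<in> {1..length ?B - 1}"
  then have h: "1 \<le> h" "h \<le> length T" by auto
  show "gap_closed_step (?B ! (h - 1)) (?B ! h)"
  proof (cases "h = length T")
    case True
    then have "?B ! (h - 1) = set (T ! 0)" using nth_chain_of_key[of "h - 1" T] h by simp
    moreover have "0 < length T" using h by linarith
    ultimately have "?B ! (h - 1) \<subseteq> {1..n}" using column_subset[of 0] by simp
    then show ?thesis using True gap_closed_step_atLeastAtMost by simp
  next
    case False
    define j where "j = length T - Suc h"
    have "j + 1 < length T" "?B ! (h - 1) = set (T ! (j + 1))" "?B ! h = set (T ! j)"
      using nth_chain_of_key[of h] nth_chain_of_key[of "h - 1"] h False unfolding j_def
      by (auto simp: Suc_diff_Suc)
    then show ?thesis using assms gapless_key_iff by simp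
  qed
qed

end

text \<open>The partition whose column lengths are \<open>ls 0 > ... > ls (m - 1)\<close>.\<close>

definition conjugate :: "nat \<Rightarrow> nat \<Rightarrow> (nat \<Rightarrow> nat) \<Rightarrow> nat list" where
  "conjugate n m ls = map (\<lambda>i. card {j. j < m \<and> i + 1 \<le> ls j}) [0..<n]"

lemma nth_conjugate: "i < n \<Longrightarrow> conjugate n m ls ! i = card {j. j < m \<and> i + 1 \<le> ls j}"
  by (simp add: conjugate_def)

lemma is_partition_conjugate: "is_partition n (conjugate n m ls)"
  unfolding is_partition_def
proof (intro conjI allI impI)
  show "length (conjugate n m ls) = n" by (simp add: conjugate_def)
  show "conjugate n m ls ! (i + 1) \<le> conjugate n m ls ! i" if "i + 1 < n" for i
    using that by (simp add: nth_conjugate) (rule card_mono, auto)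
qed

context
  fixes n m :: nat and ls :: "nat \<Rightarrow> nat"
  assumes n_pos: "1 \<le> n" and ls_range: "\<And>j. j < m \<Longrightarrow> 1 \<le> ls j \<and> ls j < n"
    and ls_decreasing: "\<And>j j'. j < j' \<Longrightarrow> j' < m \<Longrightarrow> ls j' < ls j"
begin

lemma conjugate_0: "conjugate n m ls ! 0 = m"
proof -
  have "{j. j < m \<and> 0 + 1 \<le> ls j} = {..<m}" using ls_range by auto
  then show ?thesis using nth_conjugate[of 0] n_pos by simp
qed

lemma col_len_conjugate:
  assumes j: "j < m"
  shows "col_len n (conjugate n m ls) (j + 1) = ls j"
proof -
  have antimono: "j \<le> j' \<Longrightarrow> j' < m \<Longrightarrow> ls j' \<le> ls j" for j j'
    using ls_decreasing by (metis le_less order_refl)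
  have "i \<in> {i\<in>{1..n}. j + 1 \<le> conjugate n m ls ! (i - 1)} \<longleftrightarrow> i \<in> {1..ls j}" for i
  proof (cases "1 \<le> i \<and> i \<le> n")
    case True
    then have "conjugate n m ls ! (i - 1) = card {j'. j' < m \<and> i \<le> ls j'}"
      using nth_conjugate[of "i - 1"] by auto
    then show ?thesis using le_card_ge_iff[OF antimono, where c = "j + 1" and i = i] j True by simp
  next
    case False
    then show ?thesis using ls_range[OF j] by auto
  qed
  then have "{i\<in>{1..n}. j + 1 \<le> conjugate n m ls ! (i - 1)} = {1..ls j}" by blast
  then show ?thesis unfolding col_len_def by simp
qed

lemma distinct_short_cols_conjugate: "distinct_short_cols n (conjugate n m ls)"
  unfolding distinct_short_cols_def conjugate_0
proof (intro conjI ballI inj_onI)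
  fix a b assume ab: "a \<in> {1..m}" "b \<in> {1..m}"
    "col_len n (conjugate n m ls) a = col_len n (conjugate n m ls) b"
  have "a - 1 < m" "b - 1 < m" using ab by auto
  moreover from this have "ls (a - 1) = ls (b - 1)"
    using ab col_len_conjugate[of "a - 1"] col_len_conjugate[of "b - 1"] by simp
  ultimately have "a - 1 = b - 1" using ls_decreasing by (metis less_irrefl nat_neq_iff)
  then show "a = b" using ab by auto
next
  fix j assume "j \<in> {1..m}"
  then have "j - 1 < m" "j - 1 + 1 = j" by auto
  then show "col_len n (conjugate n m ls) j < n"
    using col_len_conjugate[of "j - 1"] ls_range[of "j - 1"] by simp
qed

end

lemma length_key_of_chain [simp]: "length (key_of_chain Bs) = length Bs - 1"
  by (simp add: key_of_chain_def)

lemma nth_key_of_chain: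
  "j < length Bs - 1 \<Longrightarrow> key_of_chain Bs ! j = sorted_list_of_set (Bs ! (length Bs - Suc (Suc j)))"
  by (simp add: key_of_chain_def rev_nth nth_butlast)

context
  fixes n :: nat and Bs :: "nat set list"
  assumes chain: "strict_chain n Bs"
begin

lemma set_nth_key_of_chain:
  "j < length Bs - 1 \<Longrightarrow> set (key_of_chain Bs ! j) = Bs ! (length Bs - Suc (Suc j))"
  using nth_key_of_chain finite_chain_nth[OF chain] by simp

lemma chain_of_key_key_of_chain: "chain_of_key n (key_of_chain Bs) = Bs"
proof -
  have "finite X" if X: "X \<in> set (butlast Bs)" for X
  proof -
    obtain i where "i < length Bs - 1" "X = Bs ! i"
      using X by (auto simp: in_set_conv_nth nth_butlast)
    then show ?thesis using finite_chain_nth[OF chain] by simp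
  qed
  then have "rev (map set (key_of_chain Bs)) = butlast Bs"
    unfolding key_of_chain_def by (simp add: rev_map[symmetric] map_idI)
  moreover have "last Bs = {1..n}" using chain unfolding strict_chain_def by simp
  ultimately show ?thesis
    unfolding chain_of_key_def using strict_chain_nonempty[OF chain] by (metis append_butlast_last_id)
qed

lemma key_of_chain_is_key:
  assumes lam_0: "lam ! 0 = length Bs - 1"
    and col_lens: "\<And>j. j < length Bs - 1 \<Longrightarrow> col_len n lam (j + 1) = card (Bs ! (length Bs - Suc (Suc j)))"
  shows "is_key n lam (key_of_chain Bs)"
proof -
  let ?T = "key_of_chain Bs"
  have nested: "Bs ! (length Bs - Suc (Suc (j + 1))) \<subseteq> Bs ! (length Bs - Suc (Suc j))"
    if "j + 1 < length Bs - 1" for j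
    using strict_chain_mono[OF chain] that by simp
  have "is_tableau n lam ?T" unfolding is_tableau_def
  proof (intro conjI allI impI)
    show "length ?T = lam ! 0" using lam_0 by simp
    fix j assume "j < length ?T"
    then have j: "j < length Bs - 1" by simp
    show "length (?T ! j) = col_len n lam (j + 1)" using nth_key_of_chain[OF j] col_lens[OF j] by simp
    show "set (?T ! j) \<subseteq> {1..n}" using set_nth_key_of_chain[OF j] strict_chain_subset[OF chain] j by simp
    show "sorted_wrt (<) (?T ! j)" using nth_key_of_chain[OF j] by simp
  next
    fix j i assume ji: "j + 1 < length ?T \<and> i < length (?T ! (j + 1))"
    then have j: "j + 1 < length Bs - 1" by simp
    then have "i < card (Bs ! (length Bs - Suc (Suc (j + 1))))" using ji nth_key_of_chain by simp
    then show "?T ! j ! i \<le> ?T ! (j + 1) ! i"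
      using nth_key_of_chain[of j] nth_key_of_chain[OF j] j
        sorted_list_of_set_nth_le[OF finite_chain_nth[OF chain] nested[OF j]] by simp
  qed
  moreover have "set (?T ! (j + 1)) \<subseteq> set (?T ! j)" if "j + 1 < length ?T" for j
    using that set_nth_key_of_chain nested by simp
  ultimately show ?thesis unfolding is_key_def by blast
qed

lemma gapless_key_of_chain:
  assumes n_pos: "1 \<le> n" and closed: "gap_closed_chain n Bs"
  shows "\<exists>lam. is_partition n lam \<and> distinct_short_cols n lam \<and> gapless_key n lam (key_of_chain Bs)"
proof -
  let ?T = "key_of_chain Bs"
  define ls where "ls j = card (Bs ! (length Bs - Suc (Suc j)))" for j
  have ls_range: "1 \<le> ls j \<and> ls j < n" if "j < length Bs - 1" for j
    unfolding ls_def using that card_chain_bounds[OF chain] by simp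
  have ls_decreasing: "ls j' < ls j" if "j < j'" "j' < length Bs - 1" for j j'
    unfolding ls_def using that card_chain_less[OF chain] by simp
  define lam where "lam = conjugate n (length Bs - 1) ls"
  note conj = n_pos ls_range ls_decreasing
  note lam = is_partition_conjugate[of n "length Bs - 1" ls, folded lam_def]
    conjugate_0[of n "length Bs - 1" ls, OF conj, folded lam_def]
    col_len_conjugate[of n "length Bs - 1" ls, OF conj, folded lam_def]
    distinct_short_cols_conjugate[of n "length Bs - 1" ls, OF conj, folded lam_def]
  have "is_key n lam ?T" using key_of_chain_is_key[OF lam(2) lam(3)[unfolded ls_def]] .
  then interpret distinct_columns_key n lam ?T using n_pos lam(4) by unfold_locales
  have "gap_closed_step (set (?T ! (j + 1))) (set (?T ! j))" if j: "j + 1 < length ?T" for j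
  proof -
    define h where "h = length Bs - Suc (Suc j)"
    have "h \<in> {1..length Bs - 1}" "h - 1 = length Bs - Suc (Suc (j + 1))" using j unfolding h_def by auto
    then have "gap_closed_step (Bs ! (length Bs - Suc (Suc (j + 1)))) (Bs ! h)"
      using closed unfolding gap_closed_chain_def by metis
    moreover have "set (?T ! (j + 1)) = Bs ! (length Bs - Suc (Suc (j + 1)))" "set (?T ! j) = Bs ! h"
      using set_nth_key_of_chain j unfolding h_def by auto
    ultimately show ?thesis by simp
  qed
  then show ?thesis using lam(1,4) gapless_key_iff by blast
qed

end

lemma distinct_columns_key_if_gapless:
  "1 \<le> n \<Longrightarrow> distinct_short_cols n lam \<Longrightarrow> gapless_key n lam T \<Longrightarrow> distinct_columns_key n lam T"
  unfolding gapless_key_def by unfold_locales auto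

lemma card_gapless_key_eq_card_rcd_chain:
  assumes n_pos: "1 \<le> n"
  shows "card {T. \<exists>lam. is_partition n lam \<and> distinct_short_cols n lam \<and> gapless_key n lam T}
       = card {Bs. rcd_chain n Bs}"
proof (rule bij_betw_same_card[of "chain_of_key n"])
  let ?keys = "{T. \<exists>lam. is_partition n lam \<and> distinct_short_cols n lam \<and> gapless_key n lam T}"
  show "bij_betw (chain_of_key n) ?keys {Bs. rcd_chain n Bs}"
    unfolding rcd_chain_iff_gap_closed_chain
  proof (rule bij_betw_byWitness[where f' = key_of_chain])
    show "\<forall>T\<in>?keys. key_of_chain (chain_of_key n T) = T"
      using distinct_columns_key.key_of_chain_chain_of_key[OF distinct_columns_key_if_gapless[OF n_pos]]
      by blast
    show "\<forall>Bs\<in>{Bs. gap_closed_chain n Bs}. chain_of_key n (key_of_chain Bs) = Bs"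
      using chain_of_key_key_of_chain unfolding gap_closed_chain_def by blast
    show "chain_of_key n ` ?keys \<subseteq> {Bs. gap_closed_chain n Bs}"
      using distinct_columns_key.gap_closed_chain_of_key[OF distinct_columns_key_if_gapless[OF n_pos]]
      by blast
    show "key_of_chain ` {Bs. gap_closed_chain n Bs} \<subseteq> ?keys"
      using gapless_key_of_chain[OF _ n_pos] unfolding gap_closed_chain_def by blast
  qed
qed

section \<open>R-permutations and ordered set partitions\<close>

definition osp_of_perm :: "nat \<Rightarrow> nat set \<Rightarrow> (nat \<Rightarrow> nat) \<Rightarrow> nat set list" where
  "osp_of_perm n R \<pi> = map (\<lambda>h. \<pi> ` {qseq n R ! h + 1 .. qseq n R ! (h + 1)}) [0..<card R + 1]"

definition R_avoiding_perms :: "nat \<Rightarrow> nat set \<Rightarrow> (nat \<Rightarrow> nat) set" where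
  "R_avoiding_perms n R = {\<pi>. R_permutation n R \<pi> \<and> \<not> R_312_containing n R \<pi>}"

lemma R_permutation_permutes: "R_permutation n R \<pi> \<Longrightarrow> \<pi> permutes {1..n}"
  unfolding R_permutation_def by (elim conjE)

locale R_blocks =
  fixes n :: nat and R :: "nat set"
  assumes n_pos: "1 \<le> n" and R_subset: "R \<subseteq> {1..n - 1}"
begin

abbreviation q :: "nat list" where "q \<equiv> qseq n R"
abbreviation r :: nat where "r \<equiv> card R"

definition block :: "nat \<Rightarrow> nat set" where
  "block h = {q ! h + 1 .. q ! (h + 1)}"

lemma finite_R: "finite R"
  using R_subset finite_subset by blast

lemma length_q: "length q = r + 2"
  using finite_R by (simp add: qseq_def)

lemma sorted_q: "sorted_wrt (<) q"
proof -
  have "\<forall>x\<in>R. 0 < x \<and> x < n" using R_subset n_pos by fastforce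
  then show ?thesis using finite_R n_pos by (auto simp: qseq_def sorted_wrt_append)
qed

lemma q_less: "i < j \<Longrightarrow> j \<le> r + 1 \<Longrightarrow> q ! i < q ! j"
  using sorted_q length_q by (auto simp: sorted_wrt_iff_nth_less)

lemma q_le: "i \<le> j \<Longrightarrow> j \<le> r + 1 \<Longrightarrow> q ! i \<le> q ! j"
  using q_less by (cases "i = j") (auto simp: le_less)

lemma q_0: "q ! 0 = 0"
  by (simp add: qseq_def)

lemma q_last: "q ! (r + 1) = n"
  using finite_R by (simp add: qseq_def nth_append)

lemma R_eq_set_q: "R = set q - {0, n}"
proof -
  have "0 \<notin> R" "n \<notin> R" using R_subset n_pos by auto
  then show ?thesis using finite_R by (auto simp: qseq_def)
qed

lemma block_subset: "h \<le> r \<Longrightarrow> block h \<subseteq> {1..n}"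
  using q_le[of "h + 1" "r + 1"] q_last unfolding block_def by auto

lemma block_nonempty: "h \<le> r \<Longrightarrow> block h \<noteq> {}"
  using q_less[of h "h + 1"] unfolding block_def by auto

lemma ex_block:
  assumes "p \<in> {1..n}"
  shows "\<exists>h\<le>r. p \<in> block h"
proof -
  define H where "H = {h. h \<le> r + 1 \<and> q ! h < p}"
  have "finite H" "0 \<in> H" using assms q_0 unfolding H_def by auto
  define h where "h = Max H"
  have "h \<in> H" unfolding h_def using \<open>finite H\<close> \<open>0 \<in> H\<close> by (intro Max_in) auto
  then have "h \<noteq> r + 1" using q_last assms unfolding H_def by auto
  then have "h \<le> r" using \<open>h \<in> H\<close> unfolding H_def by simp
  have "h + 1 \<notin> H" using Max_ge[OF \<open>finite H\<close>, of "h + 1"] unfolding h_def by auto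
  then have "p \<le> q ! (h + 1)" using \<open>h \<le> r\<close> unfolding H_def by auto
  moreover have "q ! h < p" using \<open>h \<in> H\<close> unfolding H_def by simp
  ultimately show ?thesis using \<open>h \<le> r\<close> unfolding block_def by auto
qed

lemma block_less:
  assumes "a \<in> block i" "b \<in> block j" "i < j" "j \<le> r"
  shows "a < b"
proof -
  have "q ! (i + 1) \<le> q ! j" using q_le[of "i + 1" j] assms by simp
  then show ?thesis using assms unfolding block_def by auto
qed

lemma block_unique:
  assumes "a \<in> block i" "a \<in> block j" "i \<le> r" "j \<le> r"
  shows "i = j"
proof (rule ccontr)
  assume "i \<noteq> j"
  then have "i < j \<or> j < i" by linarith
  then show False using block_less[of a i a j] block_less[of a j a i] assms by auto
qed

lemma length_osp_of_perm: "length (osp_of_perm n R \<pi>) = r + 1"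
  by (simp add: osp_of_perm_def)

lemma nth_osp_of_perm: "h \<le> r \<Longrightarrow> osp_of_perm n R \<pi> ! h = \<pi> ` block h"
  by (simp add: osp_of_perm_def block_def del: upt_Suc)

lemma R_permutation_iff:
  "R_permutation n R \<pi> \<longleftrightarrow> \<pi> permutes {1..n} \<and> (\<forall>h\<le>r. strict_mono_on (block h) \<pi>)"
proof -
  have "(\<forall>h\<in>{1..r + 1}. strict_mono_on {q ! (h - 1) + 1 .. q ! h} \<pi>) \<longleftrightarrow>
      (\<forall>h\<le>r. strict_mono_on (block h) \<pi>)"
  proof
    assume "\<forall>h\<in>{1..r + 1}. strict_mono_on {q ! (h - 1) + 1 .. q ! h} \<pi>"
    then show "\<forall>h\<le>r. strict_mono_on (block h) \<pi>"
      unfolding block_def by (metis Suc_eq_plus1 atLeastAtMost_iff diff_Suc_1 le_add2 Suc_le_mono)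
  next
    assume mono: "\<forall>h\<le>r. strict_mono_on (block h) \<pi>"
    show "\<forall>h\<in>{1..r + 1}. strict_mono_on {q ! (h - 1) + 1 .. q ! h} \<pi>"
    proof
      fix h assume "h \<in> {1..r + 1}"
      then have "h - 1 \<le> r" "h - 1 + 1 = h" by auto
      then show "strict_mono_on {q ! (h - 1) + 1 .. q ! h} \<pi>" using mono unfolding block_def by metis
    qed
  qed
  then show ?thesis unfolding R_permutation_def R_card_def by simp
qed

lemma osp_osp_of_perm:
  assumes perm: "\<pi> permutes {1..n}"
  shows "ordered_set_partition n (osp_of_perm n R \<pi>)"
  unfolding ordered_set_partition_def
proof (intro conjI allI impI)
  show "1 \<le> length (osp_of_perm n R \<pi>)" by (simp add: length_osp_of_perm)
  show "osp_of_perm n R \<pi> ! i \<noteq> {}" if "i < length (osp_of_perm n R \<pi>)" for i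
    using that nth_osp_of_perm[of i] block_nonempty[of i] by (simp add: length_osp_of_perm)
  show "osp_of_perm n R \<pi> ! i \<inter> osp_of_perm n R \<pi> ! j = {}"
    if ij: "i < j \<and> j < length (osp_of_perm n R \<pi>)" for i j
  proof -
    have "block i \<inter> block j = {}" using block_unique[of _ i j] ij by (auto simp: length_osp_of_perm)
    then show ?thesis using nth_osp_of_perm[of i] nth_osp_of_perm[of j] ij permutes_inj[OF perm]
      by (auto simp: length_osp_of_perm inj_eq)
  qed
  have "\<Union>(set (osp_of_perm n R \<pi>)) = \<pi> ` (\<Union>h\<le>r. block h)"
    by (auto simp: osp_of_perm_def block_def atLeast0LessThan lessThan_Suc_atMost simp del: upt_Suc)
  also have "(\<Union>h\<le>r. block h) = {1..n}" using block_subset ex_block by blast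
  also have "\<pi> ` {1..n} = {1..n}" using permutes_image[OF perm] .
  finally show "\<Union>(set (osp_of_perm n R \<pi>)) = {1..n}" .
qed

lemma R_312_containing_if_not_osp_avoids_312:
  assumes "\<not> osp_avoids_312 (osp_of_perm n R \<pi>)"
  shows "R_312_containing n R \<pi>"
proof -
  obtain i j l a b c where w: "i < j" "j < l" "l \<le> r" "a \<in> osp_of_perm n R \<pi> ! i"
    "b \<in> osp_of_perm n R \<pi> ! j" "c \<in> osp_of_perm n R \<pi> ! l" "b < c" "c < a"
    using assms unfolding osp_avoids_312_def by (auto simp: length_osp_of_perm)
  obtain a' where a': "a' \<in> block i" "a = \<pi> a'" using w nth_osp_of_perm[of i] by auto
  obtain b' where b': "b' \<in> block j" "b = \<pi> b'" using w nth_osp_of_perm[of j] by auto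
  obtain c' where c': "c' \<in> block l" "c = \<pi> c'" using w nth_osp_of_perm[of l] by auto
  have "j \<in> {1..r - 1}" using w by auto
  moreover have "1 \<le> a'" "a' \<le> q ! j" using a' q_le[of "i + 1" j] w unfolding block_def by auto
  moreover have "q ! j < b'" "b' \<le> q ! (j + 1)" using b' unfolding block_def by auto
  moreover have "q ! (j + 1) < c'" using c' q_le[of "j + 1" l] w unfolding block_def by auto
  moreover have "c' \<le> n" using block_subset[of l] c' w by auto
  ultimately show ?thesis unfolding R_312_containing_def R_card_def using a' b' c' w by blast
qed

lemma not_osp_avoids_312_if_R_312_containing:
  assumes "R_312_containing n R \<pi>"
  shows "\<not> osp_avoids_312 (osp_of_perm n R \<pi>)"
proof -
  obtain h a b c where h: "h \<in> {1..r - 1}" and w: "1 \<le> a" "a \<le> q ! h" "q ! h < b"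
    "b \<le> q ! (h + 1)" "q ! (h + 1) < c" "c \<le> n" "\<pi> b < \<pi> c" "\<pi> c < \<pi> a"
    using assms unfolding R_312_containing_def R_card_def by blast
  have "h \<le> r + 1" using h by auto
  then have "q ! h \<le> n" using q_le[of h "r + 1"] q_last by simp
  then obtain i where i: "i \<le> r" "a \<in> block i" using ex_block[of a] w by auto
  obtain l where l: "l \<le> r" "c \<in> block l" using ex_block[of c] w by auto
  have "b \<in> block h" using w unfolding block_def by simp
  have "i < h"
  proof (rule ccontr)
    assume "\<not> i < h"
    then have "q ! h \<le> q ! i" using q_le[of h i] i by simp
    then show False using i(2) w(2) unfolding block_def by simp
  qed
  moreover have "h < l"
  proof (rule ccontr)
    assume "\<not> h < l"
    moreover have "h + 1 \<le> r + 1" using h by auto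
    ultimately have "q ! (l + 1) \<le> q ! (h + 1)" using q_le[of "l + 1" "h + 1"] by simp
    then show False using l(2) w(5) unfolding block_def by simp
  qed
  moreover have "\<pi> a \<in> osp_of_perm n R \<pi> ! i" "\<pi> b \<in> osp_of_perm n R \<pi> ! h"
    "\<pi> c \<in> osp_of_perm n R \<pi> ! l"
    using nth_osp_of_perm[of i] nth_osp_of_perm[of h] nth_osp_of_perm[of l] i l \<open>b \<in> block h\<close> h by auto
  moreover have "l < length (osp_of_perm n R \<pi>)" using l by (simp add: length_osp_of_perm)
  ultimately show ?thesis using w unfolding osp_avoids_312_def by blast
qed

lemma osp_avoids_312_osp_of_perm_iff:
  "osp_avoids_312 (osp_of_perm n R \<pi>) \<longleftrightarrow> \<not> R_312_containing n R \<pi>"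
  using R_312_containing_if_not_osp_avoids_312 not_osp_avoids_312_if_R_312_containing by blast

lemma card_osp_of_perm_nth:
  assumes "\<pi> permutes {1..n}" "h \<le> r"
  shows "card (osp_of_perm n R \<pi> ! h) = q ! (h + 1) - q ! h"
  using assms nth_osp_of_perm[of h] permutes_inj_on[OF assms(1)] by (simp add: card_image block_def)

lemma q_eq_sum_card:
  assumes "\<pi> permutes {1..n}"
  shows "h \<le> r + 1 \<Longrightarrow> q ! h = (\<Sum>i<h. card (osp_of_perm n R \<pi> ! i))"
proof (induction h)
  case (Suc h)
  then show ?case using card_osp_of_perm_nth[OF assms, of h] q_le[of h "h + 1"] by simp
qed (simp add: q_0)

end

lemma osp_of_perm_inj:
  assumes "R_blocks n R" "R_blocks n R'" "R_permutation n R \<pi>" "R_permutation n R' \<pi>'"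
    and eq: "osp_of_perm n R \<pi> = osp_of_perm n R' \<pi>'"
  shows "R = R' \<and> \<pi> = \<pi>'"
proof -
  interpret a: R_blocks n R by (fact assms(1))
  interpret b: R_blocks n R' by (fact assms(2))
  have pa: "\<pi> permutes {1..n}" "\<forall>h\<le>card R. strict_mono_on (a.block h) \<pi>"
    using assms(3) a.R_permutation_iff by auto
  have pb: "\<pi>' permutes {1..n}" "\<forall>h\<le>card R'. strict_mono_on (b.block h) \<pi>'"
    using assms(4) b.R_permutation_iff by auto
  have card_eq: "card R = card R'"
    using arg_cong[OF eq, of length] a.length_osp_of_perm b.length_osp_of_perm by simp
  have q_eq: "qseq n R = qseq n R'"
  proof (rule nth_equalityI)
    show "length (qseq n R) = length (qseq n R')" using a.length_q b.length_q card_eq by simp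
    fix h assume "h < length (qseq n R)"
    then have h: "h \<le> card R + 1" using a.length_q by simp
    show "qseq n R ! h = qseq n R' ! h"
      using a.q_eq_sum_card[OF pa(1) h] b.q_eq_sum_card[OF pb(1)] h card_eq eq by simp
  qed
  have "\<pi> x = \<pi>' x" for x
  proof (cases "x \<in> {1..n}")
    case False
    then show ?thesis using permutes_not_in[OF pa(1)] permutes_not_in[OF pb(1)] by simp
  next
    case True
    then obtain h where h: "h \<le> card R" "x \<in> a.block h" using a.ex_block by blast
    have block_eq: "a.block h = b.block h" unfolding a.block_def b.block_def using q_eq by simp
    have "\<pi> ` a.block h = \<pi>' ` a.block h"
      using a.nth_osp_of_perm[of h \<pi>] b.nth_osp_of_perm[of h \<pi>'] eq h card_eq block_eq by simp
    moreover have "strict_mono_on (a.block h) \<pi>'" using pb(2) h card_eq block_eq by simp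
    ultimately show ?thesis
      using strict_mono_on_eq_if_image_eq[of "a.block h" \<pi> \<pi>' x] pa(2) h by (simp add: a.block_def)
  qed
  then show ?thesis using a.R_eq_set_q b.R_eq_set_q q_eq by auto
qed

locale perm_of_osp =
  fixes n :: nat and As :: "nat set list"
  assumes n_pos: "1 \<le> n" and osp: "ordered_set_partition n As"
begin

abbreviation k :: nat where "k \<equiv> length As"

text \<open>Padding with size 1 beyond the last part keeps \<open>block_end\<close> strictly increasing.\<close>

definition block_size :: "nat \<Rightarrow> nat" where
  "block_size i = (if i < k then card (As ! i) else 1)"

definition block_end :: "nat \<Rightarrow> nat" where
  "block_end h = (\<Sum>i<h. block_size i)"

definition word :: "nat list" where
  "word = concat (map sorted_list_of_set As)"

definition cuts :: "nat set" where
  "cuts = block_end ` {1..<k}"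

definition perm :: "nat \<Rightarrow> nat" where
  "perm i = (if i \<in> {1..n} then word ! (i - 1) else i)"

lemma k_pos: "0 < k"
  using osp_nonempty[OF osp] by simp

lemma finite_block: "i < k \<Longrightarrow> finite (As ! i)"
  using osp_block_subset[OF osp] finite_subset by blast

lemma block_size_pos: "1 \<le> block_size i"
  unfolding block_size_def using finite_block osp_block_nonempty[OF osp]
  by (simp add: Suc_leI card_gt_0_iff)

lemma block_end_Suc: "block_end (Suc h) = block_end h + block_size h"
  unfolding block_end_def by simp

lemma strict_mono_block_end: "strict_mono block_end"
  unfolding strict_mono_Suc_iff using block_end_Suc block_size_pos by (simp add: Suc_le_eq)

lemma block_end_0: "block_end 0 = 0"
  unfolding block_end_def by simp

lemma le_block_end: "h \<le> block_end h"
proof (induction h)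
  case (Suc h)
  then show ?case using block_end_Suc[of h] block_size_pos[of h] by simp
qed (simp add: block_end_0)

lemma block_end_length: "block_end k = n"
proof -
  have "card (\<Union>i<k. As ! i) = (\<Sum>i<k. card (As ! i))"
    using finite_block osp_block_unique[OF osp] by (intro card_UN_disjoint) blast+
  moreover have "(\<Union>i<k. As ! i) = {1..n}"
    using osp_block_subset[OF osp] osp_ex_block[OF osp] by blast
  ultimately show ?thesis unfolding block_end_def block_size_def by simp
qed

lemma sorted_list_of_set_cuts: "sorted_list_of_set cuts = map block_end [1..<k]"
proof -
  have "sorted_wrt (<) (map block_end [1..<k])"
    using strict_mono_block_end by (auto simp: sorted_wrt_iff_nth_less strict_mono_def)
  then show ?thesis unfolding cuts_def
    by (metis set_map set_upt sorted_list_of_set.idem_if_sorted_distinct strict_sorted_iff subset_UNIV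
      atLeastLessThan_upt)
qed

lemma card_cuts: "card cuts = k - 1"
  by (metis sorted_list_of_set_cuts length_map length_sorted_list_of_set length_upt)

lemma qseq_cuts: "qseq n cuts = map block_end [0..<k + 1]"
proof -
  have "[0..<k + 1] = [0] @ [1..<k] @ [k]" using k_pos by (simp add: upt_conv_Cons)
  then show ?thesis using block_end_0 block_end_length sorted_list_of_set_cuts unfolding qseq_def by simp
qed

lemma cuts_subset: "cuts \<subseteq> {1..n - 1}"
proof
  fix x assume "x \<in> cuts"
  then obtain h where h: "1 \<le> h" "h < k" "x = block_end h" unfolding cuts_def by auto
  then have "1 \<le> block_end h" using le_block_end[of h] by simp
  moreover have "block_end h < block_end k"
    using strict_mono_block_end h unfolding strict_mono_def by simp
  ultimately show "x \<in> {1..n - 1}" using h block_end_length by auto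
qed

lemma R_blocks_cuts: "R_blocks n cuts"
  using n_pos cuts_subset by unfold_locales

lemma block_end_eq_sum_list_take:
  "h \<le> k \<Longrightarrow> sum_list (map length (take h (map sorted_list_of_set As))) = block_end h"
  unfolding block_end_def block_size_def by (simp add: sum_list_sum_nth atLeast0LessThan min_def)

lemma nth_word:
  "h < k \<Longrightarrow> t < block_size h \<Longrightarrow> word ! (block_end h + t) = sorted_list_of_set (As ! h) ! t"
  using nth_concat_sum_list_take[of h "map sorted_list_of_set As" t] block_end_eq_sum_list_take[of h]
  unfolding word_def block_size_def by simp

lemma set_word: "set word = {1..n}"
proof -
  have "\<And>A. A \<in> set As \<Longrightarrow> finite A" using finite_block by (auto simp: in_set_conv_nth)
  then have "set word = \<Union>(set As)" unfolding word_def by auto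
  then show ?thesis using osp unfolding ordered_set_partition_def by simp
qed

lemma length_word: "length word = n"
proof -
  have "length word = sum_list (map length (map sorted_list_of_set As))"
    unfolding word_def by (simp add: length_concat)
  also have "\<dots> = n" using block_end_eq_sum_list_take[of k] block_end_length by simp
  finally show ?thesis .
qed

lemma perm_permutes: "perm permutes {1..n}"
proof (rule bij_imp_permutes)
  have "bij_betw (\<lambda>i. i - 1) {1..n} {..<n}"
    by (rule bij_betwI[where g = "\<lambda>i. i + 1"]) auto
  moreover have "distinct word" using length_word set_word by (simp add: card_distinct)
  then have "bij_betw ((!) word) {..<n} {1..n}" using bij_betw_nth length_word set_word by metis
  ultimately have "bij_betw ((!) word \<circ> (\<lambda>i. i - 1)) {1..n} {1..n}" by (rule bij_betw_trans)
  then show "bij_betw perm {1..n} {1..n}"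
    by (rule bij_betw_cong[THEN iffD1, rotated]) (simp add: perm_def)
  show "perm x = x" if "x \<notin> {1..n}" for x using that unfolding perm_def by (simp only: if_False)
qed

lemma block_cuts: "h < k \<Longrightarrow> R_blocks.block n cuts h = {block_end h + 1 .. block_end (h + 1)}"
  using R_blocks.block_def[OF R_blocks_cuts] qseq_cuts by (simp del: upt_Suc add: nth_map_upt)

lemma perm_block:
  assumes "h < k" "t < block_size h"
  shows "perm (block_end h + 1 + t) = sorted_list_of_set (As ! h) ! t"
proof -
  have "block_end (h + 1) \<le> block_end k"
    using assms strict_mono_block_end by (simp add: strict_mono_less_eq)
  then have "block_end h + 1 + t \<in> {1..n}" using block_end_Suc[of h] assms block_end_length by auto
  then show ?thesis using nth_word[OF assms] unfolding perm_def by simp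
qed

lemma R_permutation_perm: "R_permutation n cuts perm"
proof -
  have "strict_mono_on (R_blocks.block n cuts h) perm" if "h \<le> card cuts" for h
  proof (rule strict_mono_onI)
    have h: "h < k" using that card_cuts k_pos by linarith
    fix a b assume ab: "a \<in> R_blocks.block n cuts h" "b \<in> R_blocks.block n cuts h" "a < b"
    define ta where "ta = a - (block_end h + 1)"
    define tb where "tb = b - (block_end h + 1)"
    have t: "a = block_end h + 1 + ta" "b = block_end h + 1 + tb" "ta < tb" "tb < block_size h"
      using ab block_cuts[OF h] block_end_Suc[of h] unfolding ta_def tb_def by auto
    then have "sorted_list_of_set (As ! h) ! ta < sorted_list_of_set (As ! h) ! tb"
      using h by (intro sorted_wrt_nth_less[OF strict_sorted_list_of_set]) (auto simp: block_size_def)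
    then show "perm a < perm b" using t perm_block[OF h] by simp
  qed
  then show ?thesis using R_blocks.R_permutation_iff[OF R_blocks_cuts] perm_permutes by simp
qed

lemma osp_of_perm_perm: "osp_of_perm n cuts perm = As"
proof (rule nth_equalityI)
  show "length (osp_of_perm n cuts perm) = length As"
    using R_blocks.length_osp_of_perm[OF R_blocks_cuts] card_cuts k_pos by simp
  fix h assume "h < length (osp_of_perm n cuts perm)"
  then have h: "h < k" using R_blocks.length_osp_of_perm[OF R_blocks_cuts] card_cuts k_pos by simp
  have "osp_of_perm n cuts perm ! h = perm ` {block_end h + 1 .. block_end (h + 1)}"
    using R_blocks.nth_osp_of_perm[OF R_blocks_cuts, of h] block_cuts[OF h] h card_cuts by simp
  also have "\<dots> = As ! h"
  proof (intro equalityI subsetI)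
    fix y assume "y \<in> perm ` {block_end h + 1 .. block_end (h + 1)}"
    then obtain a where a: "a \<in> {block_end h + 1 .. block_end (h + 1)}" "y = perm a" by blast
    define t where "t = a - (block_end h + 1)"
    have "a = block_end h + 1 + t" "t < block_size h" using a block_end_Suc[of h] unfolding t_def by auto
    then have "y = sorted_list_of_set (As ! h) ! t" using a perm_block[OF h] by simp
    then show "y \<in> As ! h"
      using \<open>t < block_size h\<close> h finite_block[OF h] nth_mem[of t "sorted_list_of_set (As ! h)"]
      by (simp add: block_size_def)
  next
    fix y assume "y \<in> As ! h"
    then have "y \<in> set (sorted_list_of_set (As ! h))" using finite_block[OF h] by simp
    then obtain t where t: "t < block_size h" "y = sorted_list_of_set (As ! h) ! t"
      using h by (auto simp: in_set_conv_nth block_size_def)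
    then have "perm (block_end h + 1 + t) = y" using perm_block[OF h] by simp
    moreover have "block_end h + 1 + t \<in> {block_end h + 1 .. block_end (h + 1)}"
      using t block_end_Suc[of h] by simp
    ultimately show "y \<in> perm ` {block_end h + 1 .. block_end (h + 1)}" by blast
  qed
  finally show "osp_of_perm n cuts perm ! h = As ! h" .
qed

end

lemma C_Sigma_eq_card_Sigma:
  "C_Sigma n = card (SIGMA R:Pow {1..n - 1}. R_avoiding_perms n R)"
proof -
  have "finite (R_avoiding_perms n R)" for R
  proof (rule finite_subset)
    show "R_avoiding_perms n R \<subseteq> {\<pi>. \<pi> permutes {1..n}}"
      unfolding R_avoiding_perms_def using R_permutation_permutes by blast
  qed (simp add: finite_permutations)
  then show ?thesis unfolding C_Sigma_def C_R_def R_avoiding_perms_def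
    by (simp add: card_SigmaI)
qed

lemma bij_betw_osp_of_perm:
  assumes n_pos: "1 \<le> n"
  shows "bij_betw (\<lambda>(R, \<pi>). osp_of_perm n R \<pi>) (SIGMA R:Pow {1..n - 1}. R_avoiding_perms n R)
    {As. ordered_set_partition n As \<and> osp_avoids_312 As}"
  unfolding bij_betw_def
proof
  have R_blocks: "R_blocks n R" if "R \<in> Pow {1..n - 1}" for R
    using that n_pos by unfold_locales auto
  show "inj_on (\<lambda>(R, \<pi>). osp_of_perm n R \<pi>) (SIGMA R:Pow {1..n - 1}. R_avoiding_perms n R)"
    using osp_of_perm_inj[OF R_blocks R_blocks] unfolding R_avoiding_perms_def inj_on_def by auto
  show "(\<lambda>(R, \<pi>). osp_of_perm n R \<pi>) ` (SIGMA R:Pow {1..n - 1}. R_avoiding_perms n R)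
      = {As. ordered_set_partition n As \<and> osp_avoids_312 As}"
  proof (intro equalityI subsetI)
    fix As assume "As \<in> (\<lambda>(R, \<pi>). osp_of_perm n R \<pi>) ` (SIGMA R:Pow {1..n - 1}. R_avoiding_perms n R)"
    then obtain R \<pi> where R: "R \<in> Pow {1..n - 1}" and "\<pi> \<in> R_avoiding_perms n R"
      and As: "As = osp_of_perm n R \<pi>" by auto
    then have "\<pi> permutes {1..n}" "\<not> R_312_containing n R \<pi>"
      using R_permutation_permutes unfolding R_avoiding_perms_def by auto
    then show "As \<in> {As. ordered_set_partition n As \<and> osp_avoids_312 As}"
      using R_blocks.osp_osp_of_perm[OF R_blocks[OF R]]
        R_blocks.osp_avoids_312_osp_of_perm_iff[OF R_blocks[OF R]] As by simp
  next
    fix As assume "As \<in> {As. ordered_set_partition n As \<and> osp_avoids_312 As}"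
    then have osp: "ordered_set_partition n As" and avoids: "osp_avoids_312 As" by auto
    interpret perm_of_osp n As using n_pos osp by unfold_locales
    have "perm \<in> R_avoiding_perms n cuts"
      using R_blocks.osp_avoids_312_osp_of_perm_iff[OF R_blocks_cuts, of perm] osp_of_perm_perm avoids
        R_permutation_perm unfolding R_avoiding_perms_def by simp
    moreover have "cuts \<in> Pow {1..n - 1}" using cuts_subset by simp
    ultimately show "As \<in> (\<lambda>(R, \<pi>). osp_of_perm n R \<pi>) ` (SIGMA R:Pow {1..n - 1}. R_avoiding_perms n R)"
      using osp_of_perm_perm by (intro rev_image_eqI[of "(cuts, perm)"]) auto
  qed
qed

lemma C_Sigma_eq_card_avoiding_osp:
  "1 \<le> n \<Longrightarrow> C_Sigma n = card {As. ordered_set_partition n As \<and> osp_avoids_312 As}"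
  using C_Sigma_eq_card_Sigma bij_betw_same_card[OF bij_betw_osp_of_perm] by simp

theorem corollary9p2:
  fixes n :: nat
  assumes "n \<ge> 1"
  shows "C_Sigma n = card {As. ordered_set_partition n As \<and> osp_avoids_312 As}
       \<and> C_Sigma n = card {Bs. rcd_chain n Bs}
       \<and> C_Sigma n = card {T. \<exists>lam. is_partition n lam \<and> distinct_short_cols n lam \<and>
                                   gapless_key n lam T}"
  using C_Sigma_eq_card_avoiding_osp[OF assms] card_avoiding_osp_eq_card_rcd_chain[of n]
    card_gapless_key_eq_card_rcd_chain[OF assms]
  by simp

end
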